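(* For any toric poset $P=P(G,[\omega])$, \[E\big(\hat G^{\mathrm{Hasse}}(P(G,\omega))\big)\subseteq E\big(\hat G^{\mathrm{torHasse}}(P(G,[\omega]))\big)\subseteq E\big(\bar G^{\mathrm{tor}}(P)\big)=\bigcap_{\omega'\in[\omega]}E\big(\bar G(P(G,\omega'))\big),\] where $E(\cdot)$ denotes edge sets.
   Context: Toric poset setup: $G=(V,E)$ finite simple graph, $V=[n]$; $\mathrm{Acyc}(G)$ acyclic orientations; $P(G,\omega)$ the poset given by the transitive closure of $\omega$; $[\omega]$ the class under the equivalence generated by converting a source into a sink; the toric graphic arrangement $\mathcal{A}_{\mathrm{tor}}(H)$ of a graph $H$ on $V$ consists of the hyperplanes $H^{\mathrm{tor}}_{ij}=\{x\in\mathbb{R}^V/\mathbb{Z}^V:x_i\equiv x_j\bmod 1\}$, $\{i,j\}\in E(H)$; its chambers correspond bijectively to classes $[\omega]$, $\omega\in\mathrm{Acyc}(H)$, and $P(G,[\omega])$ is identified with its chamber $c(P)$. For an ordinary poset $Q$: $\hat G^{\mathrm{Hasse}}(Q)$ is its Hasse diagram (edges the cover relations) and $\bar G(Q)$ its transitive closure graph (edges $\{i,j\}$ with $i,j$ comparable). Toric transitive closure $\bar G^{\mathrm{tor}}(P)$: the graph with edge set $E$ together with all $\{i,j\}$ such that $H^{\mathrm{tor}}_{ij}\cap c(P)=\emptyset$. Toric Hasse diagram $\hat G^{\mathrm{torHasse}}(P)$: the unique graph on $V$ such that for every graph $H$ on $V$, $c(P)$ is a chamber of $\mathcal{A}_{\mathrm{tor}}(H)$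 iff $E(\hat G^{\mathrm{torHasse}}(P))\subseteq E(H)\subseteq E(\bar G^{\mathrm{tor}}(P))$ (its existence and uniqueness are known). *)

theory Defs
  imports "HOL-Analysis.Analysis"
begin

definition vpairs :: "'a set \<Rightarrow> 'a set set" where
  "vpairs V = {e. \<exists>i j. i \<in> V \<and> j \<in> V \<and> i \<noteq> j \<and> e = {i, j}}"

definition simple_graph :: "'a set \<Rightarrow> 'a set set \<Rightarrow> bool" where
  "simple_graph V E \<longleftrightarrow> finite V \<and> E \<subseteq> vpairs V"

definition is_orientation :: "'a set \<Rightarrow> 'a set set \<Rightarrow> ('a \<times> 'a) set \<Rightarrow> bool" where
  "is_orientation V E \<omega> \<longleftrightarrow>
     (\<forall>i j. (i, j) \<in> \<omega> \<longrightarrow> {i, j} \<in> E \<and> (j, i) \<notin> \<omega>) \<and>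
     (\<forall>i j. {i, j} \<in> E \<and> i \<noteq> j \<longrightarrow> (i, j) \<in> \<omega> \<or> (j, i) \<in> \<omega>)"

definition Acyc :: "'a set \<Rightarrow> 'a set set \<Rightarrow> ('a \<times> 'a) set set" where
  "Acyc V E = {\<omega>. is_orientation V E \<omega> \<and> acyclic \<omega>}"

definition is_source :: "'a set \<Rightarrow> ('a \<times> 'a) set \<Rightarrow> 'a \<Rightarrow> bool" where
  "is_source V \<omega> v \<longleftrightarrow> v \<in> V \<and> (\<forall>u. (u, v) \<notin> \<omega>)"

definition flip_at :: "'a \<Rightarrow> ('a \<times> 'a) set \<Rightarrow> ('a \<times> 'a) set" where
  "flip_at v \<omega> = {(a, b) \<in> \<omega>. a \<noteq> v \<and> b \<noteq> v} \<union> {(b, v) | b. (v, b) \<in> \<omega>}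
                   \<union> {(v, b) | b. (b, v) \<in> \<omega>}"

definition flip_step :: "'a set \<Rightarrow> ('a \<times> 'a) set \<Rightarrow> ('a \<times> 'a) set \<Rightarrow> bool" where
  "flip_step V \<omega> \<omega>' \<longleftrightarrow> (\<exists>v. is_source V \<omega> v \<and> \<omega>' = flip_at v \<omega>)"

definition tor_class :: "'a set \<Rightarrow> ('a \<times> 'a) set \<Rightarrow> ('a \<times> 'a) set set" where
  "tor_class V \<omega> = {\<omega>'. (sup (flip_step V) (flip_step V)\<inverse>\<inverse>)\<^sup>*\<^sup>* \<omega> \<omega>'}"

text \<open>P(G,omega) is the strict order given by the transitive closure of omega.\<close>
definition covers :: "('a \<times> 'a) set \<Rightarrow> 'a \<Rightarrow> 'a \<Rightarrow> bool" where
  "covers \<omega> i j \<longleftrightarrow> (i, j) \<in> \<omega>\<^sup>+ \<and> \<not> (\<exists>k. (i, k) \<in> \<omega>\<^sup>+ \<and> (k, j) \<in> \<omega>\<^sup>+)"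

definition hasse_edges :: "('a \<times> 'a) set \<Rightarrow> 'a set set" where
  "hasse_edges \<omega> = {{i, j} | i j. covers \<omega> i j}"

definition tc_edges :: "('a \<times> 'a) set \<Rightarrow> 'a set set" where
  "tc_edges \<omega> = {{i, j} | i j. (i, j) \<in> \<omega>\<^sup>+}"

text \<open>Points of R^V are functions vanishing outside V; the torus R^V/Z^V is
  represented by Z^V-periodic subsets of this space.\<close>
definition RV :: "'a set \<Rightarrow> ('a \<Rightarrow> real) set" where
  "RV V = {x. \<forall>v. v \<notin> V \<longrightarrow> x v = 0}"

definition ZV :: "'a set \<Rightarrow> ('a \<Rightarrow> real) set" where
  "ZV V = {z. (\<forall>v. z v \<in> \<int>) \<and> (\<forall>v. v \<notin> V \<longrightarrow> z v = 0)}"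

text \<open>Lift of the complement of the toric graphic arrangement A_tor(H).\<close>
definition tor_complement :: "'a set \<Rightarrow> 'a set set \<Rightarrow> ('a \<Rightarrow> real) set" where
  "tor_complement V H = {x \<in> RV V. \<forall>i j. {i, j} \<in> H \<longrightarrow> x i - x j \<notin> \<int>}"

text \<open>Chambers of A_tor(H) (connected components of the complement in the torus),
  represented by their preimages in R^V: the union of all integer translates of a
  connected component of the lifted complement.\<close>
definition tor_chambers :: "'a set \<Rightarrow> 'a set set \<Rightarrow> ('a \<Rightarrow> real) set set" where
  "tor_chambers V H =
     {(\<Union>z\<in>ZV V. (\<lambda>x. (\<lambda>v. x v + z v)) ` connected_component_set (tor_complement V H) p)
       | p. p \<in> tor_complement V H}"

definition orient_of :: "'a set set \<Rightarrow> ('a \<Rightarrow> real) \<Rightarrow> ('a \<times> 'a) set" where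
  "orient_of E x = {(i, j). {i, j} \<in> E \<and> frac (x i) < frac (x j)}"

text \<open>The chamber c(P) of A_tor(G) identified with the toric poset P(G,[\<omega>]).\<close>
definition tor_chamber :: "'a set \<Rightarrow> 'a set set \<Rightarrow> ('a \<times> 'a) set \<Rightarrow> ('a \<Rightarrow> real) set" where
  "tor_chamber V E \<omega> = {x \<in> tor_complement V E. orient_of E x \<in> tor_class V \<omega>}"

definition torTC_edges :: "'a set \<Rightarrow> 'a set set \<Rightarrow> ('a \<times> 'a) set \<Rightarrow> 'a set set" where
  "torTC_edges V E \<omega> = E \<union> {{i, j} | i j. i \<in> V \<and> j \<in> V \<and> i \<noteq> j \<and>
       (\<forall>x \<in> tor_chamber V E \<omega>. x i - x j \<notin> \<int>)}"

definition torHasse_edges :: "'a set \<Rightarrow> 'a set set \<Rightarrow> ('a \<times> 'a) set \<Rightarrow> 'a set set" where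
  "torHasse_edges V E \<omega> = (THE F. F \<subseteq> vpairs V \<and>
      (\<forall>H. H \<subseteq> vpairs V \<longrightarrow>
         (tor_chamber V E \<omega> \<in> tor_chambers V H \<longleftrightarrow> F \<subseteq> H \<and> H \<subseteq> torTC_edges V E \<omega>)))"

end

theory Submission
  imports Defs
begin

text \<open>
  Lift the torus to \<open>\<real>\<^sup>V\<close>. A point y lies in the connected component of p in the lifted
  complement of the arrangement of H iff every edge difference y k - y l stays in the open unit
  interval of p k - p l; so the chambers of the toric arrangement are the \<open>\<int>\<^sup>V\<close>-orbits of
  these cells. Lowering a source past the integer below it is a source-to-sink flip, raising a sink
  past the next integer undoes one, and both moves keep all edge floors; a descent on the floors of
  the coordinates shows conversely that all points with the edge floors of p are reached by flips.
  Hence c(P) is the orbit of the cell of any of its points p, and c(P) is a chamber of the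
  arrangement of H iff H lies in the toric transitive closure T and the H-cell of p lies in the
  T-cell of p.

  Cells are systems of strict difference constraints \<open>y k - y l < \<lfloor>p k - p l\<rfloor> + 1\<close>; a
  constraint is redundant iff it is implied by a walk of other constraints that is no heavier, and
  such detours can be substituted for all redundant edges at once. So the toric Hasse diagram is
  the set of irredundant edges of T. A cover i \<prec> j is irredundant, witnessed by a point of c(P)
  where only p j separates p i from a slightly larger value. Finally, an edge i j of T is comparable
  in every \<open>\<omega>' \<in> [\<omega>]\<close>: otherwise ranking the vertices of \<open>\<omega>'\<close> with i and j merged would give a
  point of c(P) on the hyperplane of i j.
\<close>

lemma floor_eq_and_not_Ints:
  fixes a :: real
  assumes "of_int m < a" "a < of_int m + 1"
  shows "\<lfloor>a\<rfloor> = m \<and> a \<notin> \<int>"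
  using assms by (auto elim!: Ints_cases) linarith

lemma of_int_floor_less_if_not_Ints:
  fixes a :: real
  shows "a \<notin> \<int> \<Longrightarrow> of_int \<lfloor>a\<rfloor> < a"
  by (metis Ints_of_int less_eq_real_def of_int_floor_le)

lemma floor_uminus_not_Ints:
  fixes a :: real
  shows "a \<notin> \<int> \<Longrightarrow> \<lfloor>- a\<rfloor> = - \<lfloor>a\<rfloor> - 1"
  by (simp add: floor_minus ceiling_altdef) (metis Ints_of_int)

lemma diff_Ints_commute:
  fixes a b :: real
  shows "a - b \<in> \<int> \<longleftrightarrow> b - a \<in> \<int>"
  by (metis minus_diff_eq Ints_minus)

lemma frac_eq_iff_diff_Ints:
  fixes a b :: real
  shows "frac a = frac b \<longleftrightarrow> a - b \<in> \<int>"
  by (metis frac_eq_0_iff frac_diff_zero frac_diff_eq)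

lemma floor_diff_frac:
  fixes a b :: real
  shows "\<lfloor>a - b\<rfloor> = \<lfloor>a\<rfloor> - \<lfloor>b\<rfloor> - (if frac a < frac b then 1 else 0)"
proof (rule floor_unique)
  have "a = of_int \<lfloor>a\<rfloor> + frac a" "b = of_int \<lfloor>b\<rfloor> + frac b"
    by (simp_all add: frac_def)
  moreover have "0 \<le> frac a" "frac a < 1" "0 \<le> frac b" "frac b < 1"
    by (simp_all add: frac_lt_1)
  ultimately show "of_int (\<lfloor>a\<rfloor> - \<lfloor>b\<rfloor> - (if frac a < frac b then 1 else 0)) \<le> a - b"
    and "a - b < of_int (\<lfloor>a\<rfloor> - \<lfloor>b\<rfloor> - (if frac a < frac b then 1 else 0)) + 1"
    by (cases "frac a < frac b"; simp only: if_True if_False of_int_diff of_int_1 of_int_0; linarith)+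
qed

lemma floor_frac_of_int_add:
  fixes r :: real
  assumes "0 \<le> r" "r < 1"
  shows "\<lfloor>of_int k + r\<rfloor> = k \<and> frac (of_int k + r) = r"
  using assms by (simp add: frac_def floor_unique)

lemma of_int_between_if_floor_neq:
  fixes a b :: real
  assumes "\<lfloor>a\<rfloor> \<noteq> \<lfloor>b\<rfloor>"
  obtains m :: int where "min a b \<le> of_int m" "of_int m \<le> max a b"
proof (cases "\<lfloor>a\<rfloor> < \<lfloor>b\<rfloor>")
  case True
  then show ?thesis by (intro that[of "\<lfloor>b\<rfloor>"]) (auto simp: min_def max_def, linarith+)
next
  case False
  then show ?thesis using assms
    by (intro that[of "\<lfloor>a\<rfloor>"]) (auto simp: min_def max_def, linarith+)
qed

section \<open>Cells of the lifted arrangement\<close>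

definition cell :: "'a set \<Rightarrow> 'a set set \<Rightarrow> ('a \<Rightarrow> real) \<Rightarrow> ('a \<Rightarrow> real) set" where
  "cell V H p = {y \<in> RV V. \<forall>k l. {k, l} \<in> H \<longrightarrow> \<lfloor>y k - y l\<rfloor> = \<lfloor>p k - p l\<rfloor> \<and> y k - y l \<notin> \<int>}"

definition translate :: "('a \<Rightarrow> real) \<Rightarrow> ('a \<Rightarrow> real) \<Rightarrow> ('a \<Rightarrow> real)" where
  "translate z x = (\<lambda>v. x v + z v)"

definition tor_cell :: "'a set \<Rightarrow> 'a set set \<Rightarrow> ('a \<Rightarrow> real) \<Rightarrow> ('a \<Rightarrow> real) set" where
  "tor_cell V H p = (\<Union>z\<in>ZV V. translate z ` cell V H p)"

lemma cellD:
  "y \<in> cell V H p \<Longrightarrow> {k, l} \<in> H \<Longrightarrow> \<lfloor>y k - y l\<rfloor> = \<lfloor>p k - p l\<rfloor> \<and> y k - y l \<notin> \<int>"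
  unfolding cell_def by blast

lemma self_in_cell: "p \<in> tor_complement V H \<Longrightarrow> p \<in> cell V H p"
  by (auto simp: cell_def tor_complement_def)

lemma cell_subset_complement: "cell V H p \<subseteq> tor_complement V H"
  by (auto simp: cell_def tor_complement_def)

lemma cell_antimono: "G \<subseteq> H \<Longrightarrow> cell V H p \<subseteq> cell V G p"
  unfolding cell_def by blast

lemma complement_antimono: "G \<subseteq> H \<Longrightarrow> tor_complement V H \<subseteq> tor_complement V G"
  unfolding tor_complement_def by blast

lemma cell_fun_upd:
  assumes p: "p \<in> tor_complement V H" and i: "i \<in> V"
    and nbr: "\<And>l. {i, l} \<in> H \<Longrightarrow> \<lfloor>a - p l\<rfloor> = \<lfloor>p i - p l\<rfloor> \<and> a - p l \<notin> \<int>"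
  shows "p(i := a) \<in> cell V H p"
proof -
  let ?y = "p(i := a)"
  have p_nonint: "p k - p l \<notin> \<int>" if "{k, l} \<in> H" for k l using p that by (simp add: tor_complement_def)
  have "\<lfloor>?y k - ?y l\<rfloor> = \<lfloor>p k - p l\<rfloor> \<and> ?y k - ?y l \<notin> \<int>"
    if kl: "{k, l} \<in> H" for k l
  proof -
    consider "k = i" | "l = i" "k \<noteq> i" | "k \<noteq> i" "l \<noteq> i" by blast
    then show ?thesis
    proof cases
      case 1
      then have "l \<noteq> i" using p_nonint[OF kl] by auto
      then show ?thesis using 1 nbr kl by simp
    next
      case 2
      then have ik: "{i, k} \<in> H" using kl by (simp add: insert_commute)
      have "\<lfloor>p k - a\<rfloor> = \<lfloor>p k - p i\<rfloor>" "p k - a \<notin> \<int>"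
        using nbr[OF ik] p_nonint[OF ik] floor_uminus_not_Ints[of "a - p k"]
          floor_uminus_not_Ints[of "p i - p k"]
        by (simp_all add: diff_Ints_commute[of "p k"])
      then show ?thesis using 2 by simp
    next
      case 3
      then show ?thesis using p_nonint[OF kl] by simp
    qed
  qed
  moreover have "?y \<in> RV V" using p i by (auto simp: tor_complement_def RV_def)
  ultimately show ?thesis by (simp add: cell_def)
qed

lemma convex_comb_in_open_interval:
  fixes a b c d t :: real
  assumes "c < a" "a < d" "c < b" "b < d" "0 \<le> t" "t \<le> 1"
  shows "c < (1 - t) * a + t * b \<and> (1 - t) * a + t * b < d"
proof
  show "(1 - t) * a + t * b < d" using assms by (intro convex_bound_lt) auto
  have "(1 - t) * (- a) + t * (- b) < - c" using assms by (intro convex_bound_lt) auto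
  then show "c < (1 - t) * a + t * b" by simp
qed

lemma cell_segment:
  assumes p: "p \<in> tor_complement V H" and y: "y \<in> cell V H p" and t: "0 \<le> t" "t \<le> 1"
  shows "(\<lambda>v. (1 - t) * p v + t * y v) \<in> cell V H p"
proof -
  have "\<lfloor>(1 - t) * (p k - p l) + t * (y k - y l)\<rfloor> = \<lfloor>p k - p l\<rfloor> \<and>
      (1 - t) * (p k - p l) + t * (y k - y l) \<notin> \<int>" if kl: "{k, l} \<in> H" for k l
  proof (rule floor_eq_and_not_Ints)
    let ?m = "\<lfloor>p k - p l\<rfloor>"
    have y_kl: "\<lfloor>y k - y l\<rfloor> = ?m" "y k - y l \<notin> \<int>" using cellD[OF y kl] by auto
    have "p k - p l \<notin> \<int>" using p kl by (simp add: tor_complement_def)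
    then have "of_int ?m < p k - p l" by (rule of_int_floor_less_if_not_Ints)
    moreover have "of_int ?m < y k - y l"
      using of_int_floor_less_if_not_Ints[OF y_kl(2)] y_kl(1) by simp
    moreover have "y k - y l < of_int \<lfloor>y k - y l\<rfloor> + 1" "p k - p l < of_int ?m + 1"
      by linarith+
    ultimately have "of_int ?m < (1 - t) * (p k - p l) + t * (y k - y l) \<and>
        (1 - t) * (p k - p l) + t * (y k - y l) < of_int ?m + 1"
      using y_kl(1) by (intro convex_comb_in_open_interval[OF _ _ _ _ t]) simp_all
    then show "of_int ?m < (1 - t) * (p k - p l) + t * (y k - y l)"
      and "(1 - t) * (p k - p l) + t * (y k - y l) < of_int ?m + 1" by auto
  qed
  moreover have "(1 - t) * p k + t * y k - ((1 - t) * p l + t * y l) =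
      (1 - t) * (p k - p l) + t * (y k - y l)" for k l
    by (simp add: algebra_simps)
  ultimately show ?thesis
    using p y by (auto simp: cell_def tor_complement_def RV_def)
qed

lemma connected_component_eq_cell:
  assumes p: "p \<in> tor_complement V H"
  shows "connected_component_set (tor_complement V H) p = cell V H p"
proof
  show "cell V H p \<subseteq> connected_component_set (tor_complement V H) p"
  proof
    fix y assume y: "y \<in> cell V H p"
    define s where "s = (\<lambda>t::real. (\<lambda>v. (1 - t) * p v + t * y v))"
    have "connected (s ` {0..1})"
      unfolding s_def by (intro connected_continuous_image continuous_intros) simp
    moreover have "s ` {0..1} \<subseteq> tor_complement V H"
      using cell_segment[OF p y] cell_subset_complement unfolding s_def by fastforce
    moreover have "p \<in> s ` {0..1}" by (rule image_eqI[of _ _ 0]) (simp_all add: s_def)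
    ultimately have "s ` {0..1} \<subseteq> connected_component_set (tor_complement V H) p"
      by (intro connected_component_maximal)
    moreover have "y \<in> s ` {0..1}" by (rule image_eqI[of _ _ 1]) (simp_all add: s_def)
    ultimately show "y \<in> connected_component_set (tor_complement V H) p" by blast
  qed
next
  show "connected_component_set (tor_complement V H) p \<subseteq> cell V H p"
  proof
    fix y assume y: "y \<in> connected_component_set (tor_complement V H) p"
    let ?S = "connected_component_set (tor_complement V H) p"
    have S: "?S \<subseteq> tor_complement V H" by (rule connected_component_subset)
    have "\<lfloor>y k - y l\<rfloor> = \<lfloor>p k - p l\<rfloor>" if kl: "{k, l} \<in> H" for k l
    proof (rule ccontr)
      assume "\<lfloor>y k - y l\<rfloor> \<noteq> \<lfloor>p k - p l\<rfloor>"
      then obtain m :: int where m: "min (y k - y l) (p k - p l) \<le> of_int m"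
        "of_int m \<le> max (y k - y l) (p k - p l)"
        by (rule of_int_between_if_floor_neq)
      let ?f = "\<lambda>x::'a \<Rightarrow> real. x k - x l"
      have "continuous_on ?S ?f"
        by (intro continuous_on_diff continuous_on_subset[OF continuous_on_product_coordinates]) auto
      then have "connected (?f ` ?S)" by (rule connected_continuous_image) simp
      moreover have "?f y \<in> ?f ` ?S" "?f p \<in> ?f ` ?S"
        using y p by (auto simp: connected_component_refl)
      ultimately have "of_int m \<in> ?f ` ?S"
        using m unfolding is_interval_connected_1[symmetric] is_interval_1
        by (cases "y k - y l \<le> p k - p l") (auto simp: min_def max_def)
      then obtain x where x: "x \<in> tor_complement V H" and "x k - x l = of_int m" using S by auto
      then have "x k - x l \<in> \<int>" by simp
      with x kl show False by (simp add: tor_complement_def)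
    qed
    then show "y \<in> cell V H p"
      using y S by (auto simp: cell_def tor_complement_def)
  qed
qed

lemma ZV_diff_Ints: "z \<in> ZV V \<Longrightarrow> z k - z l \<in> \<int>"
  by (simp add: ZV_def)

lemma translate_diff: "translate z x k - translate z x l = (x k - x l) + (z k - z l)"
  by (simp add: translate_def)

lemma add_Ints_iff: "(c::real) \<in> \<int> \<Longrightarrow> a + c \<in> \<int> \<longleftrightarrow> a \<in> \<int>"
  by (metis Ints_add Ints_diff add_diff_cancel_right')

lemma translate_mem_cell:
  assumes z: "z \<in> ZV V" and y: "y \<in> cell V H p"
  shows "translate z y \<in> cell V H (translate z p)"
proof -
  have "translate z y \<in> RV V" using y z by (simp add: cell_def RV_def ZV_def translate_def)
  then show ?thesis
    using y ZV_diff_Ints[OF z] by (auto simp: cell_def translate_diff add_Ints_iff)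
qed

lemma translate_mem_complement:
  assumes z: "z \<in> ZV V" and x: "x \<in> tor_complement V H"
  shows "translate z x \<in> tor_complement V H"
proof -
  have "translate z x \<in> RV V" using x z by (simp add: tor_complement_def RV_def ZV_def translate_def)
  then show ?thesis
    using x ZV_diff_Ints[OF z] by (auto simp: tor_complement_def translate_diff add_Ints_iff)
qed

lemma orient_of_translate: "z \<in> ZV V \<Longrightarrow> orient_of E (translate z x) = orient_of E x"
  by (simp add: orient_of_def translate_def ZV_def frac_add_int_right)

lemma ZV_add: "z \<in> ZV V \<Longrightarrow> z' \<in> ZV V \<Longrightarrow> (\<lambda>v. z v + z' v) \<in> ZV V"
  by (simp add: ZV_def)

lemma ZV_uminus: "z \<in> ZV V \<Longrightarrow> (\<lambda>v. - z v) \<in> ZV V"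
  by (simp add: ZV_def)

lemma translate_zero [simp]: "translate (\<lambda>v. 0) x = x"
  by (simp add: translate_def)

lemma translate_translate: "translate z (translate z' x) = translate (\<lambda>v. z v + z' v) x"
  by (simp add: translate_def algebra_simps)

lemma cell_translate:
  assumes z: "z \<in> ZV V"
  shows "cell V H (translate z p) = translate z ` cell V H p"
proof
  show "translate z ` cell V H p \<subseteq> cell V H (translate z p)"
    using translate_mem_cell[OF z] by blast
  show "cell V H (translate z p) \<subseteq> translate z ` cell V H p"
  proof
    fix y assume "y \<in> cell V H (translate z p)"
    then have "translate (\<lambda>v. - z v) y \<in> cell V H (translate (\<lambda>v. - z v) (translate z p))"
      by (rule translate_mem_cell[OF ZV_uminus[OF z]])
    then have "translate (\<lambda>v. - z v) y \<in> cell V H p" by (simp add: translate_translate)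
    moreover have "y = translate z (translate (\<lambda>v. - z v) y)"
      by (simp add: translate_translate)
    ultimately show "y \<in> translate z ` cell V H p" by blast
  qed
qed

lemma cell_eq_if_mem: "y \<in> cell V H q \<Longrightarrow> cell V H y = cell V H q"
  unfolding cell_def by auto

lemma cell_subset_tor_cell: "cell V H p \<subseteq> tor_cell V H p"
proof -
  have "(\<lambda>v. 0) \<in> ZV V" "translate (\<lambda>v. 0) ` cell V H p = cell V H p"
    by (simp_all add: ZV_def)
  then show ?thesis unfolding tor_cell_def by blast
qed

lemma tor_cell_subset_complement: "tor_cell V H p \<subseteq> tor_complement V H"
  unfolding tor_cell_def using translate_mem_complement cell_subset_complement by blast

lemma tor_cell_eq_if_mem:
  assumes "p \<in> tor_cell V H q"
  shows "tor_cell V H p = tor_cell V H q"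
proof -
  obtain z y where z: "z \<in> ZV V" and y: "y \<in> cell V H q" and p: "p = translate z y"
    using assms unfolding tor_cell_def by blast
  have cell_p: "cell V H p = translate z ` cell V H q"
    unfolding p cell_translate[OF z] cell_eq_if_mem[OF y] ..
  show ?thesis
  proof
    show "tor_cell V H p \<subseteq> tor_cell V H q"
      unfolding tor_cell_def cell_p image_image translate_translate
      using ZV_add[OF _ z] by blast
    show "tor_cell V H q \<subseteq> tor_cell V H p"
    proof
      fix x assume "x \<in> tor_cell V H q"
      then obtain z' u where "z' \<in> ZV V" "u \<in> cell V H q" "x = translate z' u"
        unfolding tor_cell_def by blast
      moreover have "translate z' u = translate (\<lambda>v. z' v + - z v) (translate z u)"
        by (simp add: translate_translate)
      ultimately show "x \<in> tor_cell V H p"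
        unfolding tor_cell_def cell_p using ZV_add ZV_uminus[OF z] by blast
    qed
  qed
qed

lemma tor_chambers_eq: "tor_chambers V H = {tor_cell V H q | q. q \<in> tor_complement V H}"
proof -
  have "(\<Union>z\<in>ZV V. (\<lambda>x v. x v + z v) ` connected_component_set (tor_complement V H) q) = tor_cell V H q"
    if "q \<in> tor_complement V H" for q
    unfolding tor_cell_def translate_def connected_component_eq_cell[OF that] ..
  then show ?thesis unfolding tor_chambers_def by blast
qed

section \<open>Orientations induced by points and source-to-sink flips\<close>

definition same_floors :: "'a set set \<Rightarrow> ('a \<Rightarrow> real) \<Rightarrow> ('a \<Rightarrow> real) \<Rightarrow> bool" where
  "same_floors E x y \<longleftrightarrow> (\<forall>k l. {k, l} \<in> E \<longrightarrow> \<lfloor>x k - x l\<rfloor> = \<lfloor>y k - y l\<rfloor>)"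

lemma same_floors_sym: "same_floors E x y \<Longrightarrow> same_floors E y x"
  by (simp add: same_floors_def)

lemma same_floors_trans: "same_floors E x y \<Longrightarrow> same_floors E y z \<Longrightarrow> same_floors E x z"
  by (simp add: same_floors_def)

lemma cell_iff_same_floors: "y \<in> cell V E p \<longleftrightarrow> y \<in> tor_complement V E \<and> same_floors E y p"
  by (auto simp: cell_def tor_complement_def same_floors_def)

lemma edge_vertices: "E \<subseteq> vpairs V \<Longrightarrow> {k, l} \<in> E \<Longrightarrow> k \<in> V \<and> l \<in> V \<and> k \<noteq> l"
  unfolding vpairs_def by (auto simp: doubleton_eq_iff)

lemma orient_of_iff: "(a, b) \<in> orient_of E x \<longleftrightarrow> {a, b} \<in> E \<and> frac (x a) < frac (x b)"
  by (simp add: orient_of_def)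

lemma frac_neq_if_complement:
  "x \<in> tor_complement V E \<Longrightarrow> {k, l} \<in> E \<Longrightarrow> frac (x k) \<noteq> frac (x l)"
  by (simp add: tor_complement_def frac_eq_iff_diff_Ints)

lemma flip_at_iff:
  "(a, b) \<in> flip_at v w \<longleftrightarrow>
     ((a, b) \<in> w \<and> a \<noteq> v \<and> b \<noteq> v) \<or> (b = v \<and> (v, a) \<in> w) \<or> (a = v \<and> (b, v) \<in> w)"
  unfolding flip_at_def by blast

lemma flip_at_flip_at [simp]: "flip_at v (flip_at v w) = w"
  by (auto simp: flip_at_iff)

lemma tor_class_eq: "tor_class V w = {w'. equivclp (flip_step V) w w'}"
  by (simp add: tor_class_def equivclp_def symclp_pointfree)

lemma frac_lt_at_source:
  assumes x: "x \<in> tor_complement V E" and src: "\<forall>u. (u, v) \<notin> orient_of E x" and b: "{v, b} \<in> E"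
  shows "frac (x v) < frac (x b)"
  using frac_neq_if_complement[OF x b] src b by (auto simp: orient_of_iff insert_commute)

lemma frac_lt_at_sink:
  assumes x: "x \<in> tor_complement V E" and snk: "\<forall>b. (v, b) \<notin> orient_of E x" and b: "{v, b} \<in> E"
  shows "frac (x b) < frac (x v)"
  using frac_neq_if_complement[OF x b] snk b by (auto simp: orient_of_iff)

lemma flip_by_moving_vertex:
  assumes Ev: "E \<subseteq> vpairs V" and x: "x \<in> tor_complement V E" and v: "v \<in> V"
    and nbr: "\<And>b. {v, b} \<in> E \<Longrightarrow> frac a \<noteq> frac (x b) \<and>
                 (frac a < frac (x b) \<longleftrightarrow> frac (x b) < frac (x v)) \<and> \<lfloor>a - x b\<rfloor> = \<lfloor>x v - x b\<rfloor>"
  shows "x(v := a) \<in> tor_complement V E \<and> orient_of E (x(v := a)) = flip_at v (orient_of E x)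
         \<and> same_floors E (x(v := a)) x"
proof -
  have "x(v := a) \<in> cell V E x"
  proof (rule cell_fun_upd[OF x v])
    fix b assume "{v, b} \<in> E"
    then show "\<lfloor>a - x b\<rfloor> = \<lfloor>x v - x b\<rfloor> \<and> a - x b \<notin> \<int>" using nbr by (simp add: frac_eq_iff_diff_Ints)
  qed
  then have "x(v := a) \<in> tor_complement V E \<and> same_floors E (x(v := a)) x"
    by (simp add: cell_iff_same_floors)
  moreover have "(k, l) \<in> orient_of E (x(v := a)) \<longleftrightarrow> (k, l) \<in> flip_at v (orient_of E x)" for k l
  proof (cases "{k, l} \<in> E")
    case False
    then show ?thesis by (auto simp: flip_at_iff orient_of_iff insert_commute)
  next
    case kl: True
    consider "k = v" | "l = v" | "k \<noteq> v" "l \<noteq> v" by blast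
    then show ?thesis
    proof cases
      case 1
      then show ?thesis using nbr[of l] kl edge_vertices[OF Ev kl]
        by (auto simp: flip_at_iff orient_of_iff insert_commute)
    next
      case 2
      then have vk: "{v, k} \<in> E" using kl by (simp add: insert_commute)
      then show ?thesis using 2 nbr[OF vk] frac_neq_if_complement[OF x vk] edge_vertices[OF Ev vk] kl
        by (auto simp: flip_at_iff orient_of_iff)
    next
      case 3
      then show ?thesis by (auto simp: flip_at_iff orient_of_iff)
    qed
  qed
  ultimately show ?thesis by auto
qed

lemma frac_bound_below_one:
  assumes "finite V"
  obtains c where "0 \<le> c" "c < 1" "\<And>u. u \<in> V \<Longrightarrow> frac (x u) < c"
proof -
  define M where "M = Max (insert 0 ((\<lambda>u. frac (x u)) ` V))"
  have "M \<in> insert 0 ((\<lambda>u. frac (x u)) ` V)"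
    unfolding M_def using assms by (intro Max_in) auto
  then have "0 \<le> M" "M < 1" by (auto simp: frac_lt_1)
  moreover have "frac (x u) \<le> M" if "u \<in> V" for u
    unfolding M_def using assms that by (intro Max_ge) auto
  ultimately show ?thesis by (intro that[of "(1 + M) / 2"]) fastforce+
qed

lemma source_to_sink_point:
  assumes fin: "finite V" and Ev: "E \<subseteq> vpairs V" and x: "x \<in> tor_complement V E" and v: "v \<in> V"
    and src: "\<forall>u. (u, v) \<notin> orient_of E x"
  obtains x' where "x' \<in> tor_complement V E" "orient_of E x' = flip_at v (orient_of E x)"
    "same_floors E x' x" "\<lfloor>x' v\<rfloor> = \<lfloor>x v\<rfloor> - 1" "\<And>u. u \<noteq> v \<Longrightarrow> x' u = x u"
proof -
  obtain c where c: "0 \<le> c" "c < 1" "\<And>u. u \<in> V \<Longrightarrow> frac (x u) < c"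
    using frac_bound_below_one[OF fin] by blast
  define a where "a = of_int (\<lfloor>x v\<rfloor> - 1) + c"
  have "\<lfloor>a\<rfloor> = \<lfloor>x v\<rfloor> - 1 \<and> frac a = c"
    unfolding a_def by (rule floor_frac_of_int_add[OF c(1,2)])
  then have a: "\<lfloor>a\<rfloor> = \<lfloor>x v\<rfloor> - 1" "frac a = c" by auto
  have "frac a \<noteq> frac (x b) \<and> (frac a < frac (x b) \<longleftrightarrow> frac (x b) < frac (x v)) \<and>
      \<lfloor>a - x b\<rfloor> = \<lfloor>x v - x b\<rfloor>" if b: "{v, b} \<in> E" for b
  proof -
    have "frac (x b) < frac a" using c(3) a(2) edge_vertices[OF Ev b] by simp
    moreover have "frac (x v) < frac (x b)" by (rule frac_lt_at_source[OF x src b])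
    ultimately show ?thesis using floor_diff_frac[of a "x b"] floor_diff_frac[of "x v" "x b"] a(1) by auto
  qed
  then show ?thesis using flip_by_moving_vertex[OF Ev x v] a(1) by (intro that[of "x(v := a)"]) auto
qed

lemma shift_to_positive_fracs:
  assumes fin: "finite V" and Ev: "E \<subseteq> vpairs V" and x: "x \<in> tor_complement V E"
  obtains x' where "x' \<in> tor_complement V E" "orient_of E x' = orient_of E x" "same_floors E x' x"
    "\<And>u. u \<in> V \<Longrightarrow> 0 < frac (x' u)"
proof -
  obtain c where c: "0 \<le> c" "c < 1" "\<And>u. u \<in> V \<Longrightarrow> frac (x u) < c"
    using frac_bound_below_one[OF fin] by blast
  define e where "e = (1 - c) / 2"
  have e: "0 < e" "c + e < 1" using c(2) by (simp_all add: e_def field_simps)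
  define x' where "x' = (\<lambda>u. if u \<in> V then x u + e else 0)"
  have frac_x': "frac (x' u) = frac (x u) + e" if u: "u \<in> V" for u
  proof -
    have "x' u = of_int \<lfloor>x u\<rfloor> + (frac (x u) + e)" using u by (simp add: x'_def frac_def)
    moreover have "0 \<le> frac (x u) + e" "frac (x u) + e < 1"
      using e c(3)[OF u] frac_ge_0[of "x u"] by linarith+
    ultimately show ?thesis using floor_frac_of_int_add by metis
  qed
  have diff: "x' k - x' l = x k - x l" "k \<in> V" "l \<in> V" if "{k, l} \<in> E" for k l
    using edge_vertices[OF Ev that] by (auto simp: x'_def)
  have "x' \<in> tor_complement V E"
    using x diff by (auto simp: tor_complement_def RV_def x'_def)
  moreover have "orient_of E x' = orient_of E x"
    using diff frac_x' unfolding orient_of_def by auto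
  moreover have "same_floors E x' x" using diff by (simp add: same_floors_def)
  moreover have "0 < frac (x' u)" if "u \<in> V" for u
    using frac_x'[OF that] e(1) frac_ge_0[of "x u"] by linarith
  ultimately show ?thesis by (rule that)
qed

lemma sink_to_source_point:
  assumes fin: "finite V" and Ev: "E \<subseteq> vpairs V" and x: "x \<in> tor_complement V E" and v: "v \<in> V"
    and snk: "\<forall>b. (v, b) \<notin> orient_of E x"
  obtains x' where "x' \<in> tor_complement V E" "orient_of E x' = flip_at v (orient_of E x)"
    "same_floors E x' x"
proof -
  obtain y where y: "y \<in> tor_complement V E" "orient_of E y = orient_of E x" "same_floors E y x"
    and pos: "\<And>u. u \<in> V \<Longrightarrow> 0 < frac (y u)"
    using shift_to_positive_fracs[OF fin Ev x] by blast
  define a :: real where "a = of_int (\<lfloor>y v\<rfloor> + 1)"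
  have "frac a \<noteq> frac (y b) \<and> (frac a < frac (y b) \<longleftrightarrow> frac (y b) < frac (y v)) \<and>
      \<lfloor>a - y b\<rfloor> = \<lfloor>y v - y b\<rfloor>" if b: "{v, b} \<in> E" for b
  proof -
    have "frac a < frac (y b)" using pos edge_vertices[OF Ev b] by (simp add: a_def)
    moreover have "frac (y b) < frac (y v)" using frac_lt_at_sink[OF y(1) _ b] snk y(2) by simp
    ultimately show ?thesis using floor_diff_frac[of a "y b"] floor_diff_frac[of "y v" "y b"]
      by (auto simp: a_def)
  qed
  then have "y(v := a) \<in> tor_complement V E" "orient_of E (y(v := a)) = flip_at v (orient_of E y)"
    "same_floors E (y(v := a)) y"
    using flip_by_moving_vertex[OF Ev y(1) v] by auto
  then show ?thesis using that y(2,3) same_floors_trans by metis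
qed

lemma flip_step_realizable:
  assumes fin: "finite V" and Ev: "E \<subseteq> vpairs V" and x: "x \<in> tor_complement V E"
    and step: "flip_step V (orient_of E x) w \<or> flip_step V w (orient_of E x)"
  obtains x' where "x' \<in> tor_complement V E" "orient_of E x' = w" "same_floors E x' x"
  using step
proof
  assume "flip_step V (orient_of E x) w"
  then obtain v where v: "v \<in> V" "\<forall>u. (u, v) \<notin> orient_of E x"
    and w: "w = flip_at v (orient_of E x)"
    by (auto simp: flip_step_def is_source_def)
  obtain x' where "x' \<in> tor_complement V E" "orient_of E x' = flip_at v (orient_of E x)"
    "same_floors E x' x"
    using source_to_sink_point[OF fin Ev x v] by blast
  then show ?thesis using that w by blast
next
  assume "flip_step V w (orient_of E x)"
  then obtain v where src: "is_source V w v" and x_w: "orient_of E x = flip_at v w"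
    by (auto simp: flip_step_def)
  then have "\<forall>b. (v, b) \<notin> orient_of E x" by (auto simp: is_source_def flip_at_iff)
  moreover have "v \<in> V" using src by (simp add: is_source_def)
  ultimately obtain x' where "x' \<in> tor_complement V E" "orient_of E x' = flip_at v (orient_of E x)"
    "same_floors E x' x"
    using sink_to_source_point[OF fin Ev x] by blast
  then show ?thesis using that x_w by simp
qed

lemma tor_class_realizable:
  assumes fin: "finite V" and Ev: "E \<subseteq> vpairs V" and x: "x \<in> tor_complement V E"
    and w: "w \<in> tor_class V (orient_of E x)"
  obtains x' where "x' \<in> tor_complement V E" "orient_of E x' = w"
proof -
  have "equivclp (flip_step V) (orient_of E x) w" using w by (simp add: tor_class_eq)
  then have "\<exists>x'. x' \<in> tor_complement V E \<and> orient_of E x' = w"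
  proof (induction rule: equivclp_induct)
    case base
    then show ?case using x by blast
  next
    case (step w w')
    then obtain y where "y \<in> tor_complement V E" "orient_of E y = w" by blast
    then show ?case using flip_step_realizable[OF fin Ev, of y w'] step(2) by metis
  qed
  then show ?thesis using that by blast
qed

lemma same_floors_translate_if_same_orient:
  assumes x: "x \<in> RV V" and y: "y \<in> RV V" and xy: "orient_of E x = orient_of E y"
  defines "z \<equiv> (\<lambda>u. of_int (\<lfloor>y u\<rfloor> - \<lfloor>x u\<rfloor>))"
  shows "z \<in> ZV V \<and> same_floors E y (translate z x)"
proof
  show "z \<in> ZV V" using x y by (simp add: z_def ZV_def RV_def)
  have "(frac (x k) < frac (x l)) = (frac (y k) < frac (y l))" if "{k, l} \<in> E" for k l
    using xy that by (metis orient_of_iff)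
  then show "same_floors E y (translate z x)"
    unfolding same_floors_def translate_diff z_def
    by (auto simp: floor_diff_frac[of "y _"] floor_diff_frac[of "x _"] simp flip: of_int_diff)
qed

lemma same_floors_translate_if_tor_class:
  assumes fin: "finite V" and Ev: "E \<subseteq> vpairs V"
    and x: "x \<in> tor_complement V E" and y: "y \<in> tor_complement V E"
    and xy: "orient_of E y \<in> tor_class V (orient_of E x)"
  obtains z where "z \<in> ZV V" "same_floors E y (translate z x)"
proof -
  have "\<forall>y'. y' \<in> tor_complement V E \<longrightarrow> orient_of E y' = w \<longrightarrow>
      (\<exists>z\<in>ZV V. same_floors E y' (translate z x))"
    if "equivclp (flip_step V) (orient_of E x) w" for w
    using that
  proof (induction rule: equivclp_induct)
    case base
    show ?case
    proof (intro allI impI)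
      fix y' assume "y' \<in> tor_complement V E" "orient_of E y' = orient_of E x"
      then show "\<exists>z\<in>ZV V. same_floors E y' (translate z x)"
        using same_floors_translate_if_same_orient[of x V y' E] x by (auto simp: tor_complement_def)
    qed
  next
    case (step w w')
    show ?case
    proof (intro allI impI)
      fix y' assume y': "y' \<in> tor_complement V E" "orient_of E y' = w'"
      have "flip_step V (orient_of E y') w \<or> flip_step V w (orient_of E y')"
        using step.hyps(2) y'(2) by blast
      then obtain y0 where y0: "y0 \<in> tor_complement V E" "orient_of E y0 = w" "same_floors E y0 y'"
        using flip_step_realizable[OF fin Ev y'(1)] by blast
      then obtain z where "z \<in> ZV V" "same_floors E y0 (translate z x)" using step.IH by blast
      then show "\<exists>z\<in>ZV V. same_floors E y' (translate z x)"
        using y0(3) by (meson same_floors_sym same_floors_trans)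
    qed
  qed
  then show ?thesis using y xy that by (auto simp: tor_class_eq)
qed

lemma floor_shift_diff_on_edge:
  assumes "same_floors E y p" "{k, l} \<in> E"
  shows "(\<lfloor>y k\<rfloor> - \<lfloor>p k\<rfloor>) - (\<lfloor>y l\<rfloor> - \<lfloor>p l\<rfloor>) =
    (if frac (y k) < frac (y l) then 1 else 0) - (if frac (p k) < frac (p l) then 1 else 0)"
  using assms floor_diff_frac[of "y k" "y l"] floor_diff_frac[of "p k" "p l"]
  by (simp add: same_floors_def)

lemma orient_eq_if_floor_shift_const:
  assumes Ev: "E \<subseteq> vpairs V" and yp: "same_floors E y p"
    and const: "\<And>u w. u \<in> V \<Longrightarrow> w \<in> V \<Longrightarrow> \<lfloor>y u\<rfloor> - \<lfloor>p u\<rfloor> = \<lfloor>y w\<rfloor> - \<lfloor>p w\<rfloor>"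
  shows "orient_of E y = orient_of E p"
proof -
  have "(frac (y k) < frac (y l)) = (frac (p k) < frac (p l))" if kl: "{k, l} \<in> E" for k l
    using floor_shift_diff_on_edge[OF yp kl] const[of k l] edge_vertices[OF Ev kl]
    by (auto split: if_splits)
  then show ?thesis unfolding orient_of_def by auto
qed

text \<open>Take, among the vertices v maximising \<open>\<lfloor>y v\<rfloor> - \<lfloor>p v\<rfloor>\<close>, one where the fractional part of
  y is smallest.\<close>

lemma source_at_max_floor_shift:
  assumes fin: "finite V" and ne: "V \<noteq> {}" and Ev: "E \<subseteq> vpairs V" and yp: "same_floors E y p"
  obtains v where "v \<in> V" "\<And>u. u \<in> V \<Longrightarrow> \<lfloor>y u\<rfloor> - \<lfloor>p u\<rfloor> \<le> \<lfloor>y v\<rfloor> - \<lfloor>p v\<rfloor>"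
    "\<forall>u. (u, v) \<notin> orient_of E y"
proof -
  define g where "g u = \<lfloor>y u\<rfloor> - \<lfloor>p u\<rfloor>" for u
  define S where "S = {u \<in> V. g u = Max (g ` V)}"
  have "Max (g ` V) \<in> g ` V" using fin ne by simp
  then have S: "finite S" "S \<noteq> {}" using fin by (auto simp: S_def)
  have "Min ((\<lambda>u. frac (y u)) ` S) \<in> (\<lambda>u. frac (y u)) ` S" using S by (intro Min_in) auto
  then obtain v where v: "v \<in> S" "Min ((\<lambda>u. frac (y u)) ` S) = frac (y v)" by blast
  have max: "g u \<le> g v" if "u \<in> V" for u
    using v(1) fin that by (simp add: S_def)
  have "(u, v) \<notin> orient_of E y" for u
  proof
    assume "(u, v) \<in> orient_of E y"
    then have uv: "{u, v} \<in> E" and lt: "frac (y u) < frac (y v)" by (auto simp: orient_of_iff)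
    have "u \<in> V" using edge_vertices[OF Ev uv] by blast
    moreover have "g v \<le> g u"
      using floor_shift_diff_on_edge[OF yp uv] lt unfolding g_def by (simp split: if_splits)
    ultimately have "u \<in> S" using max[of u] v(1) by (auto simp: S_def)
    then have "Min ((\<lambda>u. frac (y u)) ` S) \<le> frac (y u)" using S(1) by (intro Min_le) auto
    then show False using lt v(2) by simp
  qed
  then show ?thesis using that v(1) max unfolding S_def g_def by blast
qed

text \<open>Pushing such a source down by one unit decreases \<open>\<Sum>v\<in>V. \<lfloor>y v\<rfloor> - \<lfloor>p v\<rfloor>\<close> while keeping it
  bounded below, so finitely many source-to-sink flips lead from y to p.\<close>

lemma flip_reachable_if_same_floors:
  assumes fin: "finite V" and Ev: "E \<subseteq> vpairs V"
    and y: "y \<in> tor_complement V E" and yp: "same_floors E y p"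
  shows "(flip_step V)\<^sup>*\<^sup>* (orient_of E y) (orient_of E p)"
proof -
  define g where "g x u = \<lfloor>x u\<rfloor> - \<lfloor>p u\<rfloor>" for x :: "'a \<Rightarrow> real" and u
  define m where "m = Min (insert 0 (g y ` V))"
  have "(flip_step V)\<^sup>*\<^sup>* (orient_of E x) (orient_of E p)"
    if "x \<in> tor_complement V E" "same_floors E x p" "\<forall>u\<in>V. m \<le> g x u"
      "(\<Sum>u\<in>V. nat (g x u - m)) = n" for n x
    using that
  proof (induction n arbitrary: x rule: less_induct)
    case (less n x)
    note x = less.prems
    show ?case
    proof (cases "\<forall>u\<in>V. \<forall>w\<in>V. g x u = g x w")
      case True
      then have "orient_of E x = orient_of E p"
        using orient_eq_if_floor_shift_const[OF Ev x(2)] unfolding g_def by blast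
      then show ?thesis by simp
    next
      case False
      then have "V \<noteq> {}" by blast
      obtain v where v: "v \<in> V" "\<And>u. u \<in> V \<Longrightarrow> g x u \<le> g x v" "\<forall>u. (u, v) \<notin> orient_of E x"
        using source_at_max_floor_shift[OF fin \<open>V \<noteq> {}\<close> Ev x(2)] unfolding g_def by blast
      from False obtain u w where uw: "u \<in> V" "w \<in> V" "g x u \<noteq> g x w" by blast
      then have "g x u < g x v \<or> g x w < g x v" using v(2)[of u] v(2)[of w] by linarith
      then have m_v: "m < g x v" using x(3) uw by fastforce
      obtain x' where x': "x' \<in> tor_complement V E" "orient_of E x' = flip_at v (orient_of E x)"
        "same_floors E x' x" "\<lfloor>x' v\<rfloor> = \<lfloor>x v\<rfloor> - 1" "\<And>u. u \<noteq> v \<Longrightarrow> x' u = x u"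
        using source_to_sink_point[OF fin Ev x(1) v(1,3)] by blast
      have g': "g x' v = g x v - 1" "\<And>u. u \<noteq> v \<Longrightarrow> g x' u = g x u"
        using x'(4,5) by (simp_all add: g_def)
      have bound': "\<forall>u\<in>V. m \<le> g x' u"
      proof
        fix u assume "u \<in> V"
        then show "m \<le> g x' u" using x(3) g' m_v by (cases "u = v") auto
      qed
      have "(\<Sum>u\<in>V. nat (g x u - m)) = nat (g x v - m) + (\<Sum>u\<in>V - {v}. nat (g x u - m))"
        by (rule sum.remove[OF fin v(1)])
      moreover have "(\<Sum>u\<in>V. nat (g x' u - m)) = nat (g x' v - m) + (\<Sum>u\<in>V - {v}. nat (g x' u - m))"
        by (rule sum.remove[OF fin v(1)])
      moreover have "(\<Sum>u\<in>V - {v}. nat (g x' u - m)) = (\<Sum>u\<in>V - {v}. nat (g x u - m))"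
        using g'(2) by (intro sum.cong) auto
      ultimately have "(\<Sum>u\<in>V. nat (g x' u - m)) < n" using x(4) g'(1) m_v by simp
      then have "(flip_step V)\<^sup>*\<^sup>* (orient_of E x') (orient_of E p)"
        using less.IH x'(1) same_floors_trans[OF x'(3) x(2)] bound' by blast
      moreover have "flip_step V (orient_of E x) (orient_of E x')"
        unfolding flip_step_def is_source_def using v(1,3) x'(2) by blast
      ultimately show ?thesis by (simp add: converse_rtranclp_into_rtranclp)
    qed
  qed
  moreover have "\<forall>u\<in>V. m \<le> g y u" using fin by (simp add: m_def)
  ultimately show ?thesis using y yp by blast
qed

section \<open>Cells as difference constraints and redundant edges\<close>

lemma cell_iff_bounds:
  assumes p: "p \<in> tor_complement V H"
  shows "y \<in> cell V H p \<longleftrightarrow>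
    y \<in> RV V \<and> (\<forall>k l. {k, l} \<in> H \<longrightarrow> y k - y l < of_int \<lfloor>p k - p l\<rfloor> + 1)"
proof -
  have "(\<lfloor>y k - y l\<rfloor> = \<lfloor>p k - p l\<rfloor> \<and> y k - y l \<notin> \<int>) \<longleftrightarrow>
      y k - y l < of_int \<lfloor>p k - p l\<rfloor> + 1 \<and> y l - y k < of_int \<lfloor>p l - p k\<rfloor> + 1"
    if kl: "{k, l} \<in> H" for k l
  proof -
    have "p k - p l \<notin> \<int>" using p kl by (simp add: tor_complement_def)
    then have "\<lfloor>p l - p k\<rfloor> = - \<lfloor>p k - p l\<rfloor> - 1"
      using floor_uminus_not_Ints[of "p k - p l"] by simp
    then show ?thesis
      using floor_eq_and_not_Ints[of "\<lfloor>p k - p l\<rfloor>" "y k - y l"]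
        of_int_floor_less_if_not_Ints[of "y k - y l"]
      by (auto, linarith+)
  qed
  then show ?thesis unfolding cell_def by (auto simp: insert_commute)
qed

lemma midpoint_in_cell:
  assumes p: "p \<in> tor_complement V H" and f: "f \<in> RV V"
    and bounds: "\<And>k l. {k, l} \<in> H \<Longrightarrow> f k - f l \<le> of_int \<lfloor>p k - p l\<rfloor> + 1"
  shows "(\<lambda>v. (p v + f v) / 2) \<in> cell V H p"
  unfolding cell_iff_bounds[OF p]
proof (intro conjI allI impI)
  show "(\<lambda>v. (p v + f v) / 2) \<in> RV V" using p f by (simp add: tor_complement_def RV_def)
  fix k l assume kl: "{k, l} \<in> H"
  have "p k - p l < of_int \<lfloor>p k - p l\<rfloor> + 1" by linarith
  then show "(p k + f k) / 2 - (p l + f l) / 2 < of_int \<lfloor>p k - p l\<rfloor> + 1"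
    using bounds[OF kl] by (simp add: field_simps)
qed

inductive walk :: "('a \<Rightarrow> 'a \<Rightarrow> bool) \<Rightarrow> ('a \<Rightarrow> 'a \<Rightarrow> int) \<Rightarrow> 'a \<Rightarrow> 'a \<Rightarrow> int \<Rightarrow> nat \<Rightarrow> bool"
  for A w where
  walk_Nil: "walk A w a a 0 0"
| walk_Cons: "A a c \<Longrightarrow> walk A w c b W L \<Longrightarrow> walk A w a b (w a c + W) (Suc L)"

lemma walk_append:
  "walk A w a k W1 L1 \<Longrightarrow> walk A w k b W2 L2 \<Longrightarrow> walk A w a b (W1 + W2) (L1 + L2)"
  by (induction rule: walk.induct) (auto simp: add.assoc intro: walk.intros)

lemma walk_arc: "A a b \<Longrightarrow> walk A w a b (w a b) 1"
  using walk_Cons[OF _ walk_Nil, of A a b w] by simp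

lemma walk_snoc: "walk A w a k W L \<Longrightarrow> A k b \<Longrightarrow> walk A w a b (W + w k b) (Suc L)"
  using walk_append[OF _ walk_arc, of A w a k W L b] by simp

lemma walk_mono: "walk A w a b W L \<Longrightarrow> (\<And>x y. A x y \<Longrightarrow> A' x y) \<Longrightarrow> walk A' w a b W L"
  by (induction rule: walk.induct) (auto intro: walk.intros)

lemma walk_length_0: "walk A w a b W 0 \<Longrightarrow> a = b \<and> W = 0"
  by (erule walk.cases) auto

lemma walk_length_1: "walk A w a b W (Suc 0) \<Longrightarrow> A a b"
  by (erule walk.cases) (auto dest: walk_length_0)

lemma walk_first_exit:
  assumes "walk A w a b W L"
  shows "walk A' w a b W L \<or>
    (\<exists>k l W1 L1 W2 L2. walk A' w a k W1 L1 \<and> A k l \<and> \<not> A' k l \<and> walk A w l b W2 L2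
       \<and> W = W1 + w k l + W2 \<and> L = L1 + Suc L2)"
  using assms
proof (induction rule: walk.induct)
  case (walk_Nil a)
  then show ?case by (simp add: walk.walk_Nil)
next
  case (walk_Cons a c b W L)
  show ?case
  proof (cases "A' a c")
    case False
    then show ?thesis using walk_Cons walk.walk_Nil[of A' w a] by fastforce
  next
    case True
    with walk_Cons.IH show ?thesis
      by (auto intro: walk.walk_Cons) (metis (no_types) ab_semigroup_add_class.add_ac(1) add_Suc
          walk.walk_Cons)
  qed
qed

lemma walk_weight_lower:
  fixes p :: "'a \<Rightarrow> real"
  assumes "walk A w a b W L" "\<And>x y. A x y \<Longrightarrow> s \<le> of_int (w x y) - (p x - p y)"
  shows "p a - p b + real L * s \<le> of_int W"
  using assms by (induction rule: walk.induct) (fastforce simp: algebra_simps)+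

lemma walk_diff_less:
  fixes y :: "'a \<Rightarrow> real"
  assumes "walk A w a b W L" "0 < L" "\<And>x z. A x z \<Longrightarrow> y x - y z < of_int (w x z)"
  shows "y a - y b < of_int W"
  using assms
proof (induction rule: walk.induct)
  case (walk_Cons a c b W L)
  have "y a - y c < of_int (w a c)" using walk_Cons.prems(2) walk_Cons.hyps(1) by blast
  moreover have "y c - y b \<le> of_int W"
    using walk_Cons walk_length_0[of A w c b W] by (cases L) fastforce+
  ultimately show ?case by simp
qed simp

lemma int_set_has_least:
  fixes S :: "int set"
  assumes "x \<in> S" "\<And>y. y \<in> S \<Longrightarrow> b \<le> y"
  obtains m where "m \<in> S" "\<And>y. y \<in> S \<Longrightarrow> m \<le> y"
proof -
  obtain m where m: "m \<in> S" "\<forall>y. y \<in> S \<longrightarrow> nat (m - b) \<le> nat (y - b)"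
    using ex_has_least_nat[of "\<lambda>y. y \<in> S" x "\<lambda>y. nat (y - b)"] assms(1) by blast
  have "m \<le> y" if "y \<in> S" for y
    using m(2) assms(2)[OF that] assms(2)[OF m(1)] that by (auto simp: nat_le_eq_zle)
  then show ?thesis using m(1) that by blast
qed

definition walk_dist :: "('a \<Rightarrow> 'a \<Rightarrow> bool) \<Rightarrow> ('a \<Rightarrow> 'a \<Rightarrow> int) \<Rightarrow> 'a \<Rightarrow> 'a \<Rightarrow> int" where
  "walk_dist A w a b = (SOME W. (\<exists>L. walk A w a b W L) \<and> (\<forall>W' L'. walk A w a b W' L' \<longrightarrow> W \<le> W'))"

lemma walk_dist:
  fixes p :: "'a \<Rightarrow> real"
  assumes slack: "\<And>x y. A x y \<Longrightarrow> 0 \<le> of_int (w x y) - (p x - p y)" and walk: "walk A w a b W L"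
  shows "(\<exists>L. walk A w a b (walk_dist A w a b) L) \<and> walk_dist A w a b \<le> W"
proof -
  have "\<lfloor>p a - p b\<rfloor> \<le> W'" if "walk A w a b W' L'" for W' L'
    using walk_weight_lower[OF that slack] by (simp add: floor_le_iff)
  then obtain W0 where "W0 \<in> {W. \<exists>L. walk A w a b W L}"
    "\<And>W'. W' \<in> {W. \<exists>L. walk A w a b W L} \<Longrightarrow> W0 \<le> W'"
    using int_set_has_least[of W "{W. \<exists>L. walk A w a b W L}" "\<lfloor>p a - p b\<rfloor>"] walk by blast
  then have "\<exists>W. (\<exists>L. walk A w a b W L) \<and> (\<forall>W' L'. walk A w a b W' L' \<longrightarrow> W \<le> W')" by blast
  then have "(\<exists>L. walk A w a b (walk_dist A w a b) L) \<and>
      (\<forall>W' L'. walk A w a b W' L' \<longrightarrow> walk_dist A w a b \<le> W')"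
    unfolding walk_dist_def by (rule someI_ex)
  then show ?thesis using walk by blast
qed

lemma cell_grows_if_potential:
  assumes p: "p \<in> tor_complement V G" and ij: "{i, j} \<in> G" and f: "f \<in> RV V"
    and bounds: "\<And>k l. {k, l} \<in> G - {{i, j}} \<Longrightarrow> f k - f l \<le> of_int \<lfloor>p k - p l\<rfloor> + 1"
    and gap: "of_int \<lfloor>p i - p j\<rfloor> + 2 \<le> f i - f j"
  shows "\<not> cell V (G - {{i, j}}) p \<subseteq> cell V G p"
proof -
  have "p \<in> tor_complement V (G - {{i, j}})" using p complement_antimono by blast
  then have "(\<lambda>v. (p v + f v) / 2) \<in> cell V (G - {{i, j}}) p"
    using f bounds by (rule midpoint_in_cell)
  moreover have "of_int \<lfloor>p i - p j\<rfloor> \<le> p i - p j" by simp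
  then have "\<not> (p i + f i) / 2 - (p j + f j) / 2 < of_int \<lfloor>p i - p j\<rfloor> + 1"
    using gap by (simp add: field_simps)
  then have "(\<lambda>v. (p v + f v) / 2) \<notin> cell V G p" using ij by (auto simp: cell_iff_bounds[OF p])
  ultimately show ?thesis by blast
qed

text \<open>If there were no such walk, the shortest-walk potential from i, averaged with p, would lie
  in the cell of G - {{i, j}} but violate the constraint on i j.\<close>

lemma short_detour_if_redundant:
  assumes Gv: "G \<subseteq> vpairs V" and p: "p \<in> tor_complement V G"
    and ij: "{i, j} \<in> G" and red: "cell V (G - {{i, j}}) p \<subseteq> cell V G p"
  shows "\<exists>W L. walk (\<lambda>k l. {k, l} \<in> G - {{i, j}}) (\<lambda>k l. \<lfloor>p k - p l\<rfloor> + 1) i j W L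
    \<and> W \<le> \<lfloor>p i - p j\<rfloor> + 1"
proof (rule ccontr)
  assume no_detour: "\<not> ?thesis"
  define A where "A = (\<lambda>k l. {k, l} \<in> G - {{i, j}})"
  define w where "w = (\<lambda>k l. \<lfloor>p k - p l\<rfloor> + 1)"
  have long: "w i j < W" if "walk A w i j W L" for W L
    using no_detour that unfolding A_def w_def by force
  have A_sym: "A l k" if "A k l" for k l using that by (simp add: A_def insert_commute)
  have A_V: "k \<in> V \<and> l \<in> V" if "A k l" for k l
    using that edge_vertices[OF Gv] by (auto simp: A_def)
  have w_slack: "0 \<le> of_int (w k l) - (p k - p l)" for k l unfolding w_def by linarith
  define R where "R = {l. \<exists>W L. walk A w i l W L}"
  define d where "d = walk_dist A w i"
  have d: "(\<exists>L. walk A w i l (d l) L) \<and> d l \<le> W" if "walk A w i l W L" for l W L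
    unfolding d_def using walk_dist[OF w_slack that] .
  have i_R: "i \<in> R" using walk_Nil[of A w i] by (auto simp: R_def)
  have d_i: "d i = 0"
  proof -
    obtain L where "walk A w i i (d i) L" using d[OF walk_Nil] by blast
    then have "0 \<le> d i" using walk_weight_lower[OF _ w_slack] by fastforce
    moreover have "d i \<le> 0" using d[OF walk_Nil] by blast
    ultimately show ?thesis by simp
  qed
  have closed: "l \<in> R \<and> d l \<le> d k + w k l" if k: "k \<in> R" and kl: "A k l" for k l
  proof -
    obtain W L where "walk A w i k W L" using k by (auto simp: R_def)
    then obtain L' where "walk A w i k (d k) L'" using d by blast
    then have "walk A w i l (d k + w k l) (Suc L')" using kl by (rule walk_snoc)
    then show ?thesis using d unfolding R_def by blast
  qed
  have ij_V: "i \<in> V" "j \<in> V" using edge_vertices[OF Gv ij] by auto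
  define M where "M = \<bar>of_int (w i j)\<bar> + \<bar>p j\<bar> + 1"
  define f where "f u = (if u \<notin> V then 0 else if u \<in> R then - of_int (d u) else p u - M)" for u
  have f_bound: "f k - f l \<le> of_int \<lfloor>p k - p l\<rfloor> + 1" if kl: "{k, l} \<in> G - {{i, j}}" for k l
  proof -
    have A_kl: "A k l" using kl by (simp add: A_def)
    show ?thesis
    proof (cases "k \<in> R")
      case True
      then show ?thesis using closed[OF True A_kl] A_V[OF A_kl] by (simp add: f_def w_def)
    next
      case False
      then have "l \<notin> R" using closed A_sym[OF A_kl] by blast
      then show ?thesis using False A_V[OF A_kl] w_slack[of k l] by (simp add: f_def w_def)
    qed
  qed
  have "of_int \<lfloor>p i - p j\<rfloor> + 2 \<le> f i - f j"
  proof (cases "j \<in> R")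
    case True
    then obtain W L where "walk A w i j W L" by (auto simp: R_def)
    then obtain L' where "walk A w i j (d j) L'" using d by blast
    then have "w i j < d j" by (rule long)
    then show ?thesis using True i_R d_i ij_V by (simp add: f_def w_def)
  next
    case False
    then show ?thesis using i_R d_i ij_V by (simp add: f_def M_def w_def)
  qed
  then show False using cell_grows_if_potential[OF p ij _ f_bound] red by (simp add: f_def RV_def)
qed

text \<open>Replacing, one at a time, each arc outside AH by its detour terminates: every detour is at
  least as cheap but strictly longer, and the positive slack s bounds the length of a walk by its
  weight.\<close>

lemma walk_reroute:
  fixes p :: "'a \<Rightarrow> real"
  assumes s: "0 < s" and slack: "\<And>x y. AG x y \<Longrightarrow> s \<le> of_int (w x y) - (p x - p y)"
    and HG: "\<And>x y. AH x y \<Longrightarrow> AG x y"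
    and detour: "\<And>k l. AG k l \<Longrightarrow> \<not> AH k l \<Longrightarrow> \<exists>W L. walk AG w k l W L \<and> W \<le> w k l \<and> 2 \<le> L"
    and walk: "walk AG w a b W L"
  obtains W' L' where "walk AH w a b W' L'" "W' \<le> W"
proof -
  define K where "K W = nat \<lfloor>(of_int W - (p a - p b)) / s\<rfloor>" for W
  have L_le: "L \<le> K W" if "walk AG w a b W L" for W L
  proof -
    have "real L * s \<le> of_int W - (p a - p b)" using walk_weight_lower[OF that slack] by simp
    then have "real L \<le> (of_int W - (p a - p b)) / s" using s by (simp add: field_simps)
    then show ?thesis unfolding K_def by (simp add: le_nat_iff le_floor_iff)
  qed
  have K_mono: "K W1 \<le> K W2" if "W1 \<le> W2" for W1 W2
    unfolding K_def using that s by (intro nat_mono floor_mono divide_right_mono) auto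
  have "\<forall>W L. walk AG w a b W L \<longrightarrow> K W - L = n \<longrightarrow> (\<exists>W' L'. walk AH w a b W' L' \<and> W' \<le> W)"
    for n
  proof (induction n rule: less_induct)
    case (less n)
    show ?case
    proof (intro allI impI)
      fix W L assume wl: "walk AG w a b W L" and n: "K W - L = n"
      from walk_first_exit[OF wl, of AH]
      show "\<exists>W' L'. walk AH w a b W' L' \<and> W' \<le> W"
      proof (elim disjE exE conjE)
        assume "walk AH w a b W L"
        then show ?thesis by blast
      next
        fix k l W1 L1 W2 L2
        assume h: "walk AH w a k W1 L1" "AG k l" "\<not> AH k l" "walk AG w l b W2 L2"
          "W = W1 + w k l + W2" "L = L1 + Suc L2"
        obtain W3 L3 where d: "walk AG w k l W3 L3" "W3 \<le> w k l" "2 \<le> L3"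
          using detour[OF h(2,3)] by blast
        have "walk AG w a k W1 L1" using h(1) HG by (rule walk_mono)
        then have new: "walk AG w a b (W1 + W3 + W2) (L1 + L3 + L2)"
          using walk_append[OF walk_append[OF _ d(1)] h(4)] by blast
        have le: "W1 + W3 + W2 \<le> W" using h(5) d(2) by simp
        have smaller: "K (W1 + W3 + W2) - (L1 + L3 + L2) < n"
          using L_le[OF new] K_mono[OF le] n h(6) d(3) by linarith
        obtain W' L' where "walk AH w a b W' L'" "W' \<le> W1 + W3 + W2"
          using less.IH[OF smaller] new by blast
        then show ?thesis using le by (intro exI[of _ W'] exI[of _ L']) simp
      qed
    qed
  qed
  then show ?thesis using walk that by blast
qed

lemma long_detour_if_redundant:
  assumes Gv: "G \<subseteq> vpairs V" and p: "p \<in> tor_complement V G"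
    and ij: "{i, j} \<in> G" and red: "cell V (G - {{i, j}}) p \<subseteq> cell V G p"
  shows "\<exists>W L. walk (\<lambda>k l. {k, l} \<in> G) (\<lambda>k l. \<lfloor>p k - p l\<rfloor> + 1) i j W L
    \<and> W \<le> \<lfloor>p i - p j\<rfloor> + 1 \<and> 2 \<le> L"
proof -
  obtain W L where walk: "walk (\<lambda>k l. {k, l} \<in> G - {{i, j}}) (\<lambda>k l. \<lfloor>p k - p l\<rfloor> + 1) i j W L"
    and W: "W \<le> \<lfloor>p i - p j\<rfloor> + 1"
    using short_detour_if_redundant[OF Gv p ij red] by blast
  have "i \<noteq> j" using edge_vertices[OF Gv ij] by blast
 have "L \<noteq> 0"
  proof
    assume "L = 0"
    then show False using walk_length_0[OF walk[unfolded \<open>L = 0\<close>]] \<open>i \<noteq> j\<close> by simp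
  qed
  moreover have "L \<noteq> 1"
  proof
    assume "L = 1"
    then show False using walk_length_1[OF walk[unfolded \<open>L = 1\<close> One_nat_def]] by simp
  qed
  moreover have "walk (\<lambda>k l. {k, l} \<in> G) (\<lambda>k l. \<lfloor>p k - p l\<rfloor> + 1) i j W L"
    using walk by (rule walk_mono) simp
  ultimately show ?thesis using W by (intro exI[of _ W] exI[of _ L]) simp
qed

lemma positive_slack:
  fixes p :: "'a \<Rightarrow> real"
  assumes fin: "finite V" and Gv: "G \<subseteq> vpairs V"
  obtains s where "0 < s" "\<And>k l. {k, l} \<in> G \<Longrightarrow> s \<le> of_int (\<lfloor>p k - p l\<rfloor> + 1) - (p k - p l)"
proof -
  define sl where "sl kl = of_int (\<lfloor>p (fst kl) - p (snd kl)\<rfloor> + 1) - (p (fst kl) - p (snd kl))"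
    for kl :: "'a \<times> 'a"
  have sl_pos: "0 < sl kl" for kl unfolding sl_def by linarith
  define s where "s = Min (insert 1 (sl ` (V \<times> V)))"
  have "s \<in> insert 1 (sl ` (V \<times> V))" unfolding s_def using fin by (intro Min_in) auto
  then have "0 < s" using sl_pos by force
  moreover have "s \<le> sl (k, l)" if "{k, l} \<in> G" for k l
    unfolding s_def using fin edge_vertices[OF Gv that] by (intro Min_le) auto
  ultimately show ?thesis using that unfolding sl_def by auto
qed

lemma cell_subset_if_edges_redundant:
  assumes fin: "finite V" and Gv: "G \<subseteq> vpairs V" and p: "p \<in> tor_complement V G"
    and HG: "H \<subseteq> G" and red: "\<And>e. e \<in> G - H \<Longrightarrow> cell V (G - {e}) p \<subseteq> cell V G p"
  shows "cell V H p \<subseteq> cell V G p"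
proof
  define w where "w = (\<lambda>k l. \<lfloor>p k - p l\<rfloor> + 1)"
  obtain s where s: "0 < s" "\<And>k l. {k, l} \<in> G \<Longrightarrow> s \<le> of_int (w k l) - (p k - p l)"
    using positive_slack[OF fin Gv, of p] unfolding w_def by blast
  have HG': "{x, z} \<in> G" if "{x, z} \<in> H" for x z using HG that by blast
  have detour: "\<exists>W L. walk (\<lambda>x z. {x, z} \<in> G) w k l W L \<and> W \<le> w k l \<and> 2 \<le> L"
    if "{k, l} \<in> G" "{k, l} \<notin> H" for k l
  proof -
    have "cell V (G - {{k, l}}) p \<subseteq> cell V G p" using that by (intro red) simp
    from long_detour_if_redundant[OF Gv p that(1) this] show ?thesis unfolding w_def .
  qed
  fix y assume y: "y \<in> cell V H p"
  have pH: "p \<in> tor_complement V H" using p HG complement_antimono by blast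
  have "\<forall>k l. {k, l} \<in> H \<longrightarrow> y k - y l < of_int \<lfloor>p k - p l\<rfloor> + 1"
    using y cell_iff_bounds[OF pH] by blast
  then have y_arc: "y x - y z < of_int (w x z)" if "{x, z} \<in> H" for x z
    using that by (simp add: w_def)
  have bound: "y k - y l < of_int \<lfloor>p k - p l\<rfloor> + 1" if kl: "{k, l} \<in> G" for k l
  proof -
    obtain W' L' where W': "walk (\<lambda>x z. {x, z} \<in> H) w k l W' L'" "W' \<le> w k l"
      by (rule walk_reroute[OF s(1) s(2) HG' detour walk_arc[of "\<lambda>x z. {x, z} \<in> G" k l w, OF kl]])
    have "L' \<noteq> 0"
    proof
      assume "L' = 0"
      then show False using walk_length_0[OF W'(1)[unfolded \<open>L' = 0\<close>]] edge_vertices[OF Gv kl] by simp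
    qed
    then have "y k - y l < of_int W'" using walk_diff_less[OF W'(1) _ y_arc] by simp
    then show ?thesis using W'(2) unfolding w_def by linarith
  qed
  have "y \<in> RV V" using y by (simp add: cell_def)
  then show "y \<in> cell V G p" unfolding cell_iff_bounds[OF p] using bound by simp
qed

section \<open>Points realizing an orientation\<close>

lemma frac_less_if_orient_trancl: "(a, b) \<in> (orient_of E x)\<^sup>+ \<Longrightarrow> frac (x a) < frac (x b)"
  by (induction rule: trancl_induct) (auto simp: orient_of_iff)

lemma acyclic_orient_of: "acyclic (orient_of E x)"
  unfolding acyclic_def using frac_less_if_orient_trancl[of _ _ E x] by (meson less_irrefl)

lemma is_orientation_orient_of:
  assumes "x \<in> tor_complement V E"
  shows "is_orientation V E (orient_of E x)"
  using frac_neq_if_complement[OF assms]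
  by (fastforce simp: is_orientation_def orient_of_iff insert_commute neq_iff)

lemma point_realizing_orientation:
  assumes ori: "is_orientation V E w" and Ev: "E \<subseteq> vpairs V" and x: "x \<in> RV V"
    and range: "\<And>v. v \<in> V \<Longrightarrow> 0 \<le> x v \<and> x v < 1"
    and mono: "\<And>k l. (k, l) \<in> w \<Longrightarrow> x k < x l"
  shows "x \<in> tor_complement V E \<and> orient_of E x = w"
proof -
  have frac_x: "frac (x v) = x v" if "v \<in> V" for v using range[OF that] by (simp add: frac_eq)
  have edge: "(k, l) \<in> w \<or> (l, k) \<in> w" "k \<in> V" "l \<in> V" if "{k, l} \<in> E" for k l
    using ori edge_vertices[OF Ev that] that unfolding is_orientation_def by blast+
  have w_edge: "{k, l} \<in> E" if "(k, l) \<in> w" for k l using ori that unfolding is_orientation_def by blast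
  have "frac (x k) \<noteq> frac (x l)" if "{k, l} \<in> E" for k l
    using edge[OF that] mono frac_x by (metis less_irrefl order.asym)
  then have "x \<in> tor_complement V E"
    using x by (simp add: tor_complement_def frac_eq_iff_diff_Ints)
  moreover have "(k, l) \<in> orient_of E x \<longleftrightarrow> (k, l) \<in> w" for k l
    using edge[of k l] w_edge[of k l] mono[of k l] mono[of l k] frac_x
    by (auto simp: orient_of_iff)
  ultimately show ?thesis by auto
qed

definition rank :: "'a set \<Rightarrow> ('a \<times> 'a) set \<Rightarrow> 'a \<Rightarrow> nat" where
  "rank V \<rho> v = card {u \<in> V. (u, v) \<in> \<rho>\<^sup>*}"

lemma rank_le_card: "finite V \<Longrightarrow> rank V \<rho> v \<le> card V"
  unfolding rank_def by (intro card_mono) auto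

lemma rank_less:
  assumes "finite V" "l \<in> V" "(k, l) \<in> \<rho>" "(l, k) \<notin> \<rho>\<^sup>*"
  shows "rank V \<rho> k < rank V \<rho> l"
proof -
  have "{u \<in> V. (u, k) \<in> \<rho>\<^sup>*} \<subset> {u \<in> V. (u, l) \<in> \<rho>\<^sup>*}"
    using assms by (auto intro: rtrancl_into_rtrancl)
  then show ?thesis unfolding rank_def using assms(1) by (intro psubset_card_mono) auto
qed

lemma rank_point:
  assumes fin: "finite V" and ori: "is_orientation V E w" and Ev: "E \<subseteq> vpairs V"
    and sub: "w \<subseteq> \<rho>" and no_back: "\<And>k l. (k, l) \<in> w \<Longrightarrow> (l, k) \<notin> \<rho>\<^sup>*"
  defines "x \<equiv> (\<lambda>v. if v \<in> V then real (rank V \<rho> v) / real (card V + 1) else 0)"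
  shows "x \<in> tor_complement V E \<and> orient_of E x = w"
proof (rule point_realizing_orientation[OF ori Ev])
  show "x \<in> RV V" by (simp add: x_def RV_def)
  show "0 \<le> x v \<and> x v < 1" if "v \<in> V" for v
    using rank_le_card[OF fin, of \<rho> v] that by (simp add: x_def field_simps)
  show "x k < x l" if kl: "(k, l) \<in> w" for k l
  proof -
    have "{k, l} \<in> E" using ori kl unfolding is_orientation_def by blast
    then have "k \<in> V" "l \<in> V" using edge_vertices[OF Ev] by auto
    moreover have "rank V \<rho> k < rank V \<rho> l"
      using rank_less[OF fin \<open>l \<in> V\<close>] sub kl no_back[OF kl] by blast
    ultimately show ?thesis by (simp add: x_def divide_strict_right_mono)
  qed
qed

lemma rtrancl_insert_both_cases:
  assumes "(a, b) \<in> (w \<union> {(i, j), (j, i)})\<^sup>*"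
  shows "(a, b) \<in> w\<^sup>* \<or> (((a, i) \<in> w\<^sup>* \<or> (a, j) \<in> w\<^sup>*) \<and> ((i, b) \<in> w\<^sup>* \<or> (j, b) \<in> w\<^sup>*))"
  using assms
proof (induction rule: rtrancl_induct)
  case (step c b)
  then show ?case by (auto intro: rtrancl_into_rtrancl)
qed simp

lemma point_merging_incomparable:
  assumes fin: "finite V" and Ev: "E \<subseteq> vpairs V" and ori: "is_orientation V E w"
    and acyc: "acyclic w" and ij: "i \<in> V" "j \<in> V"
    and incomparable: "(i, j) \<notin> w\<^sup>+" "(j, i) \<notin> w\<^sup>+"
  obtains x where "x \<in> tor_complement V E" "orient_of E x = w" "x i = x j"
proof -
  define \<rho> where "\<rho> = w \<union> {(i, j), (j, i)}"
  have no_back: "(l, k) \<notin> \<rho>\<^sup>*" if kl: "(k, l) \<in> w" for k l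
  proof
    assume "(l, k) \<in> \<rho>\<^sup>*"
    then have cases: "(l, k) \<in> w\<^sup>* \<or> (((l, i) \<in> w\<^sup>* \<or> (l, j) \<in> w\<^sup>*) \<and> ((i, k) \<in> w\<^sup>* \<or> (j, k) \<in> w\<^sup>*))"
      unfolding \<rho>_def by (rule rtrancl_insert_both_cases)
    have through: "(s, t) \<in> w\<^sup>+" if "(s, k) \<in> w\<^sup>*" "(l, t) \<in> w\<^sup>*" for s t
      using that kl by (meson rtrancl_into_trancl1 trancl_rtrancl_trancl)
    have "(s, s) \<notin> w\<^sup>+" for s using acyc by (simp add: acyclic_def)
    then show False using cases through incomparable by blast
  qed
  have "(i, j) \<in> \<rho>" "(j, i) \<in> \<rho>" by (simp_all add: \<rho>_def)
  then have "{u \<in> V. (u, i) \<in> \<rho>\<^sup>*} = {u \<in> V. (u, j) \<in> \<rho>\<^sup>*}"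
    by (auto intro: rtrancl_into_rtrancl)
  then have "rank V \<rho> i = rank V \<rho> j" by (simp add: rank_def)
  moreover have "w \<subseteq> \<rho>" by (auto simp: \<rho>_def)
  ultimately show ?thesis using rank_point[OF fin ori Ev _ no_back] ij that by auto
qed

section \<open>The chamber of a toric poset\<close>

lemma connected_cell: "p \<in> tor_complement V H \<Longrightarrow> connected (cell V H p)"
  unfolding connected_component_eq_cell[symmetric] by (rule connected_connected_component)

lemma cell_subset_cell_if_subset_complement:
  assumes "p \<in> tor_complement V H" "cell V H p \<subseteq> tor_complement V G" "p \<in> tor_complement V G"
  shows "cell V H p \<subseteq> cell V G p"
  using connected_component_maximal[OF self_in_cell[OF assms(1)] connected_cell[OF assms(1)] assms(2)]
  by (simp add: connected_component_eq_cell[OF assms(3)])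

lemma unique_lower_end:
  assumes F: "\<And>H. H \<subseteq> U \<Longrightarrow> P H \<longleftrightarrow> F \<subseteq> H \<and> H \<subseteq> T"
    and F': "\<And>H. H \<subseteq> U \<Longrightarrow> P H \<longleftrightarrow> F' \<subseteq> H \<and> H \<subseteq> T"
    and "F \<subseteq> T" "T \<subseteq> U" "F' \<subseteq> U"
  shows "F' = F"
proof -
  have "F' \<subseteq> T" using F[of T] F'[of T] assms(3,4) by blast
  then have "F \<subseteq> F'" using F[of F'] F'[of F'] assms(4,5) by blast
  moreover have "F' \<subseteq> F" using F[of F] F'[of F] \<open>F' \<subseteq> T\<close> assms(3,4) by blast
  ultimately show ?thesis by blast
qed

lemma tc_edges_orient_of_not_Ints:
  assumes "{a, b} \<in> tc_edges (orient_of E x)"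
  shows "x a - x b \<notin> \<int>"
proof -
  obtain c d where cd: "{a, b} = {c, d}" "(c, d) \<in> (orient_of E x)\<^sup>+"
    using assms unfolding tc_edges_def by blast
  then have "x c - x d \<notin> \<int>"
    using frac_less_if_orient_trancl[OF cd(2)] frac_eq_iff_diff_Ints[of "x c" "x d"] by auto
  then show ?thesis using cd(1) diff_Ints_commute[of "x c" "x d"] by (auto simp: doubleton_eq_iff)
qed

lemma covers_imp_arc:
  assumes "covers r i j"
  shows "(i, j) \<in> r"
proof -
  have ij: "(i, j) \<in> r\<^sup>+" and between: "\<not> (\<exists>k. (i, k) \<in> r\<^sup>+ \<and> (k, j) \<in> r\<^sup>+)"
    using assms unfolding covers_def by blast+
  obtain c where ic: "(i, c) \<in> r" and cj: "(c, j) \<in> r\<^sup>*" using tranclD[OF ij] by blast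
  show ?thesis
  proof (cases "c = j")
    case False
    then have "(c, j) \<in> r\<^sup>+" using cj by (auto dest: rtranclD)
    then show ?thesis using between ic by blast
  qed (use ic in simp)
qed

locale toric_poset =
  fixes V :: "'a set" and E :: "'a set set" and \<omega> :: "('a \<times> 'a) set"
  assumes simple: "simple_graph V E" and acyclic_orientation: "\<omega> \<in> Acyc V E"
begin

lemma finite_V: "finite V" and E_vpairs: "E \<subseteq> vpairs V"
  using simple by (auto simp: simple_graph_def)

lemma orientation: "is_orientation V E \<omega>" and acyclic: "acyclic \<omega>"
  using acyclic_orientation by (auto simp: Acyc_def)

abbreviation chamber where "chamber \<equiv> tor_chamber V E \<omega>"

abbreviation tor_closure where "tor_closure \<equiv> torTC_edges V E \<omega>"

lemma chamber_iff: "x \<in> chamber \<longleftrightarrow> x \<in> tor_complement V E \<and> orient_of E x \<in> tor_class V \<omega>"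
  by (simp add: tor_chamber_def)

lemma arc_vertices: "(k, l) \<in> \<omega> \<Longrightarrow> k \<in> V \<and> l \<in> V \<and> k \<noteq> l"
  using orientation edge_vertices[OF E_vpairs] unfolding is_orientation_def by blast

lemma not_rtrancl_reverse: "(k, l) \<in> \<omega> \<Longrightarrow> (l, k) \<notin> \<omega>\<^sup>*"
  using acyclic unfolding acyclic_def by (meson rtrancl_into_trancl2)

lemma chamber_nonempty: obtains p where "p \<in> chamber"
proof -
  obtain x where "x \<in> tor_complement V E" "orient_of E x = \<omega>"
    using rank_point[OF finite_V orientation E_vpairs subset_refl not_rtrancl_reverse] by blast
  then show ?thesis by (intro that[of x]) (simp add: chamber_iff tor_class_eq)
qed

lemma tor_class_of_chamber_point:
  "p \<in> chamber \<Longrightarrow> tor_class V (orient_of E p) = tor_class V \<omega>"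
  by (auto simp: chamber_iff tor_class_eq intro: equivclp_trans equivclp_sym)

lemma chamber_eq_tor_cell:
  assumes p: "p \<in> chamber"
  shows "chamber = tor_cell V E p"
proof
  have pE: "p \<in> tor_complement V E" using p by (simp add: chamber_iff)
  show "chamber \<subseteq> tor_cell V E p"
  proof
    fix x assume x: "x \<in> chamber"
    then have "orient_of E x \<in> tor_class V (orient_of E p)"
      using tor_class_of_chamber_point[OF p] by (simp add: chamber_iff)
    then obtain z where z: "z \<in> ZV V" "same_floors E x (translate z p)"
      using same_floors_translate_if_tor_class[OF finite_V E_vpairs pE] x by (auto simp: chamber_iff)
    then have "x \<in> cell V E (translate z p)"
      using x by (simp add: cell_iff_same_floors chamber_iff)
    then show "x \<in> tor_cell V E p" unfolding cell_translate[OF z(1)] tor_cell_def using z(1) by blast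
  qed
  show "tor_cell V E p \<subseteq> chamber"
  proof
    fix x assume "x \<in> tor_cell V E p"
    then obtain z y where z: "z \<in> ZV V" and y: "y \<in> cell V E p" and x: "x = translate z y"
      unfolding tor_cell_def by blast
    have yE: "y \<in> tor_complement V E" "same_floors E y p" using y by (simp_all add: cell_iff_same_floors)
    have "orient_of E y \<in> tor_class V (orient_of E p)"
      using flip_reachable_if_same_floors[OF finite_V E_vpairs yE]
      by (simp add: tor_class_eq converse_rtranclp_into_equivclp)
    then have "orient_of E x \<in> tor_class V \<omega>"
      using tor_class_of_chamber_point[OF p] x orient_of_translate[OF z] by simp
    moreover have "x \<in> tor_complement V E" using translate_mem_complement[OF z yE(1)] x by simp
    ultimately show "x \<in> chamber" by (simp add: chamber_iff)
  qed
qed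

lemma tor_closure_vpairs: "tor_closure \<subseteq> vpairs V"
  using E_vpairs by (auto simp: torTC_edges_def vpairs_def)

lemma E_subset_tor_closure: "E \<subseteq> tor_closure"
  by (auto simp: torTC_edges_def)

lemma mem_tor_closureI:
  "i \<in> V \<Longrightarrow> j \<in> V \<Longrightarrow> i \<noteq> j \<Longrightarrow> (\<And>x. x \<in> chamber \<Longrightarrow> x i - x j \<notin> \<int>) \<Longrightarrow> {i, j} \<in> tor_closure"
  by (auto simp: torTC_edges_def)

lemma chamber_subset_complement_tor_closure: "chamber \<subseteq> tor_complement V tor_closure"
proof
  fix x assume x: "x \<in> chamber"
  then have xE: "x \<in> tor_complement V E" by (simp add: chamber_iff)
  have "x k - x l \<notin> \<int>" if kl: "{k, l} \<in> tor_closure" for k l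
  proof (cases "{k, l} \<in> E")
    case True
    then show ?thesis using xE by (simp add: tor_complement_def)
  next
    case False
    then obtain i j where ij: "{k, l} = {i, j}" and "\<forall>y\<in>chamber. y i - y j \<notin> \<int>"
      using kl unfolding torTC_edges_def by blast
    then have "x i - x j \<notin> \<int>" using x by blast
    then show ?thesis using ij diff_Ints_commute[of "x i" "x j"] by (auto simp: doubleton_eq_iff)
  qed
  then show "x \<in> tor_complement V tor_closure" using xE by (simp add: tor_complement_def)
qed

lemma cell_subset_cell_tor_closure:
  assumes p: "p \<in> chamber" and pH: "p \<in> tor_complement V H" and sub: "cell V H p \<subseteq> chamber"
  shows "cell V H p \<subseteq> cell V tor_closure p"
  using cell_subset_cell_if_subset_complement[OF pH] sub chamber_subset_complement_tor_closure p by blast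

lemma chamber_mem_tor_chambers_iff:
  assumes Hv: "H \<subseteq> vpairs V" and p: "p \<in> chamber"
  shows "chamber \<in> tor_chambers V H \<longleftrightarrow> H \<subseteq> tor_closure \<and> cell V H p \<subseteq> cell V tor_closure p"
proof
  assume "chamber \<in> tor_chambers V H"
  then obtain q where "chamber = tor_cell V H q" unfolding tor_chambers_eq by blast
  then have chamber_eq: "chamber = tor_cell V H p" using p tor_cell_eq_if_mem[of p V H q] by simp
  then have chamber_H: "chamber \<subseteq> tor_complement V H" using tor_cell_subset_complement by blast
  have "H \<subseteq> tor_closure"
  proof
    fix e assume e: "e \<in> H"
    then obtain i j where "e = {i, j}" "i \<in> V" "j \<in> V" "i \<noteq> j" using Hv by (auto simp: vpairs_def)
    then show "e \<in> tor_closure" using chamber_H e by (auto simp: tor_complement_def intro!: mem_tor_closureI)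
  qed
  moreover have "cell V H p \<subseteq> cell V tor_closure p"
    using cell_subset_cell_tor_closure[OF p] chamber_H p cell_subset_tor_cell chamber_eq by blast
  ultimately show "H \<subseteq> tor_closure \<and> cell V H p \<subseteq> cell V tor_closure p" ..
next
  assume H: "H \<subseteq> tor_closure \<and> cell V H p \<subseteq> cell V tor_closure p"
  have p_closure: "p \<in> tor_complement V tor_closure" using p chamber_subset_complement_tor_closure by blast
  have pE: "p \<in> tor_complement V E" using p by (simp add: chamber_iff)
  have "cell V E p \<subseteq> cell V tor_closure p"
    using cell_subset_cell_tor_closure[OF p pE] chamber_eq_tor_cell[OF p] cell_subset_tor_cell by blast
  then have "cell V H p = cell V E p"
    using H cell_antimono[OF E_subset_tor_closure] cell_antimono[of H tor_closure] by blast
  then have "chamber = tor_cell V H p" using chamber_eq_tor_cell[OF p] by (simp add: tor_cell_def)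
  moreover have "p \<in> tor_complement V H" using p_closure H complement_antimono by blast
  ultimately show "chamber \<in> tor_chambers V H" unfolding tor_chambers_eq by blast
qed

definition essential_edges :: "('a \<Rightarrow> real) \<Rightarrow> 'a set set" where
  "essential_edges p = {e \<in> tor_closure. \<not> cell V (tor_closure - {e}) p \<subseteq> cell V tor_closure p}"

lemma chamber_mem_tor_chambers_iff_interval:
  assumes p: "p \<in> chamber" and Hv: "H \<subseteq> vpairs V"
  shows "chamber \<in> tor_chambers V H \<longleftrightarrow> essential_edges p \<subseteq> H \<and> H \<subseteq> tor_closure"
proof -
  have p_closure: "p \<in> tor_complement V tor_closure" using p chamber_subset_complement_tor_closure by blast
  have "cell V H p \<subseteq> cell V tor_closure p \<longleftrightarrow> essential_edges p \<subseteq> H" if H: "H \<subseteq> tor_closure"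
  proof
    assume "cell V H p \<subseteq> cell V tor_closure p"
    then show "essential_edges p \<subseteq> H"
      using H cell_antimono[of H "tor_closure - {_}" V p] unfolding essential_edges_def by blast
  next
    assume "essential_edges p \<subseteq> H"
    then show "cell V H p \<subseteq> cell V tor_closure p"
      by (intro cell_subset_if_edges_redundant[OF finite_V tor_closure_vpairs p_closure H])
        (auto simp: essential_edges_def)
  qed
  then show ?thesis using chamber_mem_tor_chambers_iff[OF Hv p] by blast
qed

lemma torHasse_edges_eq:
  assumes p: "p \<in> chamber"
  shows "torHasse_edges V E \<omega> = essential_edges p"
  unfolding torHasse_edges_def
proof (rule the_equality)
  have "essential_edges p \<subseteq> vpairs V" using tor_closure_vpairs by (auto simp: essential_edges_def)
  then show "essential_edges p \<subseteq> vpairs V \<and> (\<forall>H. H \<subseteq> vpairs V \<longrightarrow>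
      (chamber \<in> tor_chambers V H \<longleftrightarrow> essential_edges p \<subseteq> H \<and> H \<subseteq> tor_closure))"
    using chamber_mem_tor_chambers_iff_interval[OF p] by blast
next
  fix F assume F: "F \<subseteq> vpairs V \<and> (\<forall>H. H \<subseteq> vpairs V \<longrightarrow>
      (chamber \<in> tor_chambers V H \<longleftrightarrow> F \<subseteq> H \<and> H \<subseteq> tor_closure))"
  show "F = essential_edges p"
  proof (rule unique_lower_end[of "vpairs V" "\<lambda>H. chamber \<in> tor_chambers V H"])
    show "chamber \<in> tor_chambers V H \<longleftrightarrow> essential_edges p \<subseteq> H \<and> H \<subseteq> tor_closure"
      if "H \<subseteq> vpairs V" for H
      using chamber_mem_tor_chambers_iff_interval[OF p that] .
    show "chamber \<in> tor_chambers V H \<longleftrightarrow> F \<subseteq> H \<and> H \<subseteq> tor_closure" if "H \<subseteq> vpairs V" for H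
      using F that by blast
    show "essential_edges p \<subseteq> tor_closure" by (auto simp: essential_edges_def)
    show "tor_closure \<subseteq> vpairs V" by (rule tor_closure_vpairs)
    show "F \<subseteq> vpairs V" using F by blast
  qed
qed

lemma torHasse_subset_torTC: "torHasse_edges V E \<omega> \<subseteq> tor_closure"
proof -
  obtain p where "p \<in> chamber" by (rule chamber_nonempty)
  then show ?thesis by (auto simp: torHasse_edges_eq essential_edges_def)
qed


lemma tor_closure_eq_Inter: "tor_closure = (\<Inter>\<omega>'\<in>tor_class V \<omega>. tc_edges \<omega>')"
proof
  obtain p where p: "p \<in> chamber" by (rule chamber_nonempty)
  have pE: "p \<in> tor_complement V E" using p by (simp add: chamber_iff)
  show "tor_closure \<subseteq> (\<Inter>\<omega>'\<in>tor_class V \<omega>. tc_edges \<omega>')"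
  proof (intro subsetI INT_I)
    fix e \<omega>' assume e: "e \<in> tor_closure" and \<omega>': "\<omega>' \<in> tor_class V \<omega>"
    have "\<omega>' \<in> tor_class V (orient_of E p)" using \<omega>' tor_class_of_chamber_point[OF p] by simp
    then obtain x where x: "x \<in> tor_complement V E" "orient_of E x = \<omega>'"
      by (rule tor_class_realizable[OF finite_V E_vpairs pE])
    obtain i j where ij: "e = {i, j}" "i \<in> V" "j \<in> V"
      using e tor_closure_vpairs by (auto simp: vpairs_def)
    show "e \<in> tc_edges \<omega>'"
    proof (rule ccontr)
      assume "e \<notin> tc_edges \<omega>'"
      then have "(i, j) \<notin> (orient_of E x)\<^sup>+" "(j, i) \<notin> (orient_of E x)\<^sup>+"
        using ij(1) x(2) by (auto simp: tc_edges_def insert_commute)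
      then obtain y where y: "y \<in> tor_complement V E" "orient_of E y = orient_of E x" "y i = y j"
        by (rule point_merging_incomparable[OF finite_V E_vpairs is_orientation_orient_of[OF x(1)]
            acyclic_orient_of ij(2,3)])
      have "y \<in> chamber" using y x(2) \<omega>' by (simp add: chamber_iff)
      then have "y i - y j \<notin> \<int>"
        using e ij(1) chamber_subset_complement_tor_closure by (auto simp: tor_complement_def)
      then show False using y(3) by simp
    qed
  qed
  show "(\<Inter>\<omega>'\<in>tor_class V \<omega>. tc_edges \<omega>') \<subseteq> tor_closure"
  proof
    fix e assume e: "e \<in> (\<Inter>\<omega>'\<in>tor_class V \<omega>. tc_edges \<omega>')"
    then have "e \<in> tc_edges \<omega>" by (auto simp: tor_class_eq)
    then obtain a b where ab: "e = {a, b}" "(a, b) \<in> \<omega>\<^sup>+" unfolding tc_edges_def by blast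
    have "\<omega> \<subseteq> V \<times> V" using arc_vertices by auto
    then have "a \<in> V" "b \<in> V" using trancl_subset_Sigma ab(2) by blast+
    moreover have "a \<noteq> b" using acyclic ab(2) by (auto simp: acyclic_def)
    moreover have "x a - x b \<notin> \<int>" if "x \<in> chamber" for x
    proof -
      have "orient_of E x \<in> tor_class V \<omega>" using that by (simp add: chamber_iff)
      then have "{a, b} \<in> tc_edges (orient_of E x)" using e ab(1) by blast
      then show ?thesis by (rule tc_edges_orient_of_not_Ints)
    qed
    ultimately show "e \<in> tor_closure" unfolding ab(1) by (rule mem_tor_closureI)
  qed
qed

definition level :: "'a \<Rightarrow> real" where
  "level v = real (rank V \<omega> v) / real (8 * (card V + 1))"

lemma level_range: "0 \<le> level v \<and> level v < 1/8"
  using rank_le_card[OF finite_V, of \<omega> v] by (simp add: level_def field_simps)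

lemma level_mono: "(k, l) \<in> \<omega> \<Longrightarrow> level k < level l"
  using rank_less[OF finite_V _ _ not_rtrancl_reverse] arc_vertices
  by (simp add: level_def divide_strict_right_mono)

text \<open>The vertices above i are lifted by 3/8, so that only i and j lie between 1/8 and 3/8;
  moving the coordinate of i from 1/4 to 5/16 then passes that of j and no other one.\<close>

definition cover_point :: "'a \<Rightarrow> 'a \<Rightarrow> 'a \<Rightarrow> real" where
  "cover_point i j v = (if v \<notin> V then 0 else if v = i then 1/4 else if v = j then 9/32
     else (if (i, v) \<in> \<omega>\<^sup>* then 3/8 else 0) + level v)"

lemma cover_point_mono:
  assumes cov: "covers \<omega> i j" and kl: "(k, l) \<in> \<omega>"
  shows "cover_point i j k < cover_point i j l"
proof -
  let ?p = "cover_point i j"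
  have ij: "(i, j) \<in> \<omega>" using covers_imp_arc[OF cov] .
  have ijV: "i \<in> V" "j \<in> V" "i \<noteq> j" using arc_vertices[OF ij] by auto
  have klV: "k \<in> V" "l \<in> V" "k \<noteq> l" using arc_vertices[OF kl] by auto
  have p_ij: "?p i = 1/4" "?p j = 9/32" using ijV by (simp_all add: cover_point_def)
  have p_other: "?p v = (if (i, v) \<in> \<omega>\<^sup>* then 3/8 else 0) + level v"
    if "v \<in> V" "v \<noteq> i" "v \<noteq> j" for v
    using that by (simp add: cover_point_def)
  have up: "(i, l) \<in> \<omega>\<^sup>*" if "(i, k) \<in> \<omega>\<^sup>*" using that kl by (rule rtrancl_into_rtrancl)
  consider "l = i" | "l = j" | "l \<noteq> i" "l \<noteq> j" by blast
  then show ?thesis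
  proof cases
    case 1
    then have "(i, k) \<notin> \<omega>\<^sup>*" "k \<noteq> j" using not_rtrancl_reverse kl ij by auto
    then show ?thesis using 1 p_other[OF klV(1)] klV(3) level_range[of k] p_ij by simp
  next
    case 2
    show ?thesis
    proof (cases "k = i")
      case True
      then show ?thesis using 2 p_ij by simp
    next
      case False
      then have "(i, k) \<notin> \<omega>\<^sup>*"
        using cov kl 2 by (auto simp: covers_def rtrancl_eq_or_trancl)
      then show ?thesis using 2 False p_other[OF klV(1)] klV(3) level_range[of k] p_ij by simp
    qed
  next
    case 3
    show ?thesis
    proof (cases "k = i \<or> k = j")
      case True
      then have "(i, l) \<in> \<omega>\<^sup>*" using up ij by auto
      then show ?thesis using True 3 p_other[OF klV(2)] level_range[of l] p_ij by auto
    next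
      case False
      then show ?thesis
        using 3 p_other[OF klV(1)] p_other[OF klV(2)] up level_mono[OF kl]
          level_range[of k] level_range[of l] by (cases "(i, l) \<in> \<omega>\<^sup>*"; cases "(i, k) \<in> \<omega>\<^sup>*") auto
    qed
  qed
qed

lemma cover_point_in_chamber:
  assumes cov: "covers \<omega> i j"
  shows "cover_point i j \<in> chamber"
proof -
  have "cover_point i j \<in> tor_complement V E \<and> orient_of E (cover_point i j) = \<omega>"
  proof (rule point_realizing_orientation[OF orientation E_vpairs])
    show "cover_point i j \<in> RV V" by (simp add: cover_point_def RV_def)
    show "0 \<le> cover_point i j v \<and> cover_point i j v < 1" for v
      using level_range[of v] by (simp add: cover_point_def)
  qed (rule cover_point_mono[OF cov])
  then show ?thesis by (simp add: chamber_iff tor_class_eq)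
qed

lemma hasse_edge_essential:
  assumes cov: "covers \<omega> i j"
  shows "{i, j} \<in> essential_edges (cover_point i j)"
proof -
  let ?p = "cover_point i j"
  have ijE: "{i, j} \<in> E" using orientation covers_imp_arc[OF cov] by (auto simp: is_orientation_def)
  have ijV: "i \<in> V" "j \<in> V" "i \<noteq> j" using edge_vertices[OF E_vpairs ijE] by auto
  have p_ij: "?p i = 1/4" "?p j = 9/32" using ijV by (simp_all add: cover_point_def)
  have p_TC: "?p \<in> tor_complement V tor_closure"
    using cover_point_in_chamber[OF cov] chamber_subset_complement_tor_closure by blast
  have "?p(i := 5/16) \<in> cell V (tor_closure - {{i, j}}) ?p"
  proof (rule cell_fun_upd[OF _ ijV(1)])
    show "?p \<in> tor_complement V (tor_closure - {{i, j}})" using p_TC complement_antimono by blast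
    fix l assume "{i, l} \<in> tor_closure - {{i, j}}"
    then have l: "l \<in> V" "l \<noteq> i" "l \<noteq> j" using edge_vertices[OF tor_closure_vpairs, of i l] by auto
    have "?p l \<in> {0..<1/8} \<union> {3/8..<1/2}" using l level_range[of l] by (auto simp: cover_point_def)
    then consider "0 \<le> ?p l" "?p l < 1/8" | "3/8 \<le> ?p l" "?p l < 1/2" by auto
    then show "\<lfloor>5/16 - ?p l\<rfloor> = \<lfloor>?p i - ?p l\<rfloor> \<and> 5/16 - ?p l \<notin> \<int>"
    proof cases
      case 1
      then show ?thesis unfolding p_ij
        using floor_eq_and_not_Ints[of 0 "5/16 - ?p l"] floor_eq_and_not_Ints[of 0 "1/4 - ?p l"] by simp
    next
      case 2
      then show ?thesis unfolding p_ij
        using floor_eq_and_not_Ints[of "-1" "5/16 - ?p l"] floor_eq_and_not_Ints[of "-1" "1/4 - ?p l"]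
        by simp
    qed
  qed
  moreover have "?p(i := 5/16) \<notin> cell V tor_closure ?p"
  proof
    assume y: "?p(i := 5/16) \<in> cell V tor_closure ?p"
    have "{i, j} \<in> tor_closure" using ijE E_subset_tor_closure by blast
    from cellD[OF y this] have "\<lfloor>5/16 - ?p j\<rfloor> = \<lfloor>?p i - ?p j\<rfloor>" using ijV by simp
    then show False unfolding p_ij by simp
  qed
  ultimately show ?thesis using ijE E_subset_tor_closure by (auto simp: essential_edges_def)
qed

lemma hasse_subset_torHasse: "hasse_edges \<omega> \<subseteq> torHasse_edges V E \<omega>"
proof
  fix e assume "e \<in> hasse_edges \<omega>"
  then obtain i j where "e = {i, j}" "covers \<omega> i j" unfolding hasse_edges_def by blast
  then show "e \<in> torHasse_edges V E \<omega>"
    using hasse_edge_essential torHasse_edges_eq[OF cover_point_in_chamber] by simp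
qed

end

theorem mainTheorem8:
  fixes V :: "'a set" and E :: "'a set set" and \<omega> :: "('a \<times> 'a) set"
  assumes "simple_graph V E"
    and "\<omega> \<in> Acyc V E"
  shows "hasse_edges \<omega> \<subseteq> torHasse_edges V E \<omega>
       \<and> torHasse_edges V E \<omega> \<subseteq> torTC_edges V E \<omega>
       \<and> torTC_edges V E \<omega> = (\<Inter>\<omega>'\<in>tor_class V \<omega>. tc_edges \<omega>')"
proof -
  interpret toric_poset V E \<omega> using assms by unfold_locales
  show ?thesis using hasse_subset_torHasse torHasse_subset_torTC tor_closure_eq_Inter by blast
qed

end
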